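(* Assume the setting below, let $\nu\in(0,1)$, $\mu>0$, let $\theta^*\in\Theta$ be fixed (non-random), and let $s>0$ satisfy $$s\le\frac{\mu n}{[2C_b(1-\nu)]^2}\qquad\text{and}\qquad s<\frac{n}{2\sqrt3\,bC_b(1-\nu)}.$$ Then for every $\Theta$-valued random vector $\hat\theta$ that is a measurable function of the data $\mathcal D$, $$\mathbb E\exp\Big[s\Big((1-\nu)(P-P_n)(\ell_{\hat\theta}-\ell_{\theta^*})-\mu\sum_{j=1}^M\hat\theta_j\|f_j-f_{\theta^*}\|_2^2\Big)-K(\hat\theta)\Big]\le1 .$$
   Context: Setting: $(X,Y)$ random pair in $\mathcal X\times\mathbb R$ with $|Y|\le b$ a.s. ($b>0$); data $\mathcal D=\{(X_i,Y_i)\}_{i=1}^n$ i.i.d. copies of $(X,Y)$; $f_1,\dots,f_M$ deterministic measurable functions with $\max_j|f_j(X)|\le b$ a.s.; $\Theta=\{\theta\in\mathbb R^M:\theta_j\ge0,\ \sum_j\theta_j=1\}$, $f_\theta=\sum_j\theta_jf_j$; $\|f\|_2=\sqrt{\mathbb E f(X)^2}$; prior $\pi$ with $\pi_j>0$, $\sum_j\pi_j=1$, and $K(\theta)=\sum_j\theta_j\log(1/\pi_j)$. The loss satisfies: for all $f,g\in[-b,b]$, $|\ell(Y,f)-\ell(Y,g)|\le C_b|f-g|$ a.s. Notation: $\ell_\theta(y,x)=\ell(y,f_\theta(x))$; for $g(y,x)$ (possibly data-dependent), $Pg=\mathbb E[g(Y,X)\mid\mathcal D]$ with $(X,Y)$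 independent of $\mathcal D$, and $P_ng=\frac1n\sum_ig(Y_i,X_i)$. *)

theory Defs
  imports "HOL-Probability.Probability"
begin

text \<open>Weights are vectors indexed by j < M (0-based), stored as functions nat => real.\<close>

definition Theta :: "nat \<Rightarrow> (nat \<Rightarrow> real) set" where
  "Theta M = {\<theta>. (\<forall>j<M. 0 \<le> \<theta> j) \<and> (\<Sum>j<M. \<theta> j) = 1}"

definition f_theta :: "nat \<Rightarrow> (nat \<Rightarrow> 'a \<Rightarrow> real) \<Rightarrow> (nat \<Rightarrow> real) \<Rightarrow> 'a \<Rightarrow> real" where
  "f_theta M f \<theta> x = (\<Sum>j<M. \<theta> j * f j x)"

definition Kfun :: "nat \<Rightarrow> (nat \<Rightarrow> real) \<Rightarrow> (nat \<Rightarrow> real) \<Rightarrow> real" where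
  "Kfun M pr \<theta> = (\<Sum>j<M. \<theta> j * ln (1 / pr j))"

end

theory Submission
  imports Defs "HOL-Probability.Hoeffding"
begin

text \<open>Write \<open>\<lambda> = s(1-\<nu>)\<close>, \<open>g\<^sub>\<theta> = l\<^sub>\<theta> - l\<^sub>\<theta>\<^sub>*\<close> and
  \<open>pen \<theta> = s\<mu> \<Sum>\<^sub>j \<theta>\<^sub>j \<parallel>f\<^sub>j - f\<^sub>\<theta>\<^sub>*\<parallel>\<^sup>2 + K(\<theta>)\<close>, so that the exponent is
  \<open>\<lambda>(P - P\<^sub>n)g\<^sub>\<theta> - pen \<theta>\<close>. Jensen's inequality over an independent ghost sample \<open>D'\<close> bounds its
  exponential by the \<open>D'\<close>-expectation of \<open>exp(\<lambda>/n \<Sum>\<^sub>i (g\<^sub>\<theta>(D'\<^sub>i) - g\<^sub>\<theta>(D\<^sub>i)) - pen \<theta>)\<close>,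
  and bounding this by its supremum over \<open>\<theta>\<close> removes the dependence on \<open>\<theta>h\<close>. Exchanging \<open>D\<^sub>i\<close>
  and \<open>D'\<^sub>i\<close> preserves the product measure, so the double expectation is unchanged when the
  increments carry arbitrary signs; averaging over all \<open>2\<^sup>n\<close> sign patterns and separating \<open>D\<close> from \<open>D'\<close>
  by AM-GM leaves Rademacher suprema. The contraction principle replaces \<open>(2\<lambda>/n) g\<^sub>\<theta>\<close> by
  \<open>\<kappa>(f\<^sub>\<theta> - f\<^sub>\<theta>\<^sub>*)\<close> with \<open>\<kappa> = 2\<lambda>C/n\<close>; this is linear in \<open>\<theta>\<close>, so by convexity the supremum over the
  simplex is dominated by a \<open>\<pi>\<close>-weighted sum over its vertices. There the sign average becomes a
  product of \<open>cosh(\<kappa>(f\<^sub>j - f\<^sub>\<theta>\<^sub>*)(Z\<^sub>i))\<close>, whose expectation is at most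
  \<open>exp(\<kappa>\<^sup>2\<parallel>f\<^sub>j - f\<^sub>\<theta>\<^sub>*\<parallel>\<^sup>2)\<close> since \<open>\<kappa>b\<surd>3 \<le> 1\<close>, and \<open>n\<kappa>\<^sup>2 \<le> s\<mu>\<close> lets the penalty absorb it.\<close>

section \<open>Elementary inequalities for the exponential\<close>

lemma exp_increment_mono:
  fixes y' y d :: real
  assumes "y' \<le> y" "0 \<le> d"
  shows "exp (y' + d) - exp y' \<le> exp (y + d) - exp y"
proof -
  have "exp (y' + d) - exp y' = exp y' * (exp d - 1)" by (simp add: exp_add algebra_simps)
  also have "\<dots> \<le> exp y * (exp d - 1)"
    using assms by (intro mult_right_mono) auto
  also have "\<dots> = exp (y + d) - exp y" by (simp add: exp_add algebra_simps)
  finally show ?thesis .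
qed

lemma exp_add_exp_le_of_majorized:
  fixes x y X Y :: real
  assumes "x + y \<le> X + Y" "max x y \<le> max X Y"
  shows "exp x + exp y \<le> exp X + exp Y"
proof -
  have sorted: "exp x + exp y \<le> exp X + exp Y"
    if "x + y \<le> X + Y" "y \<le> x" "Y \<le> X" "x \<le> X" for x y X Y :: real
  proof -
    define y' where "y' = x + y - X"
    have "exp (y' + (X - y)) - exp y' \<le> exp (y + (X - y)) - exp y"
      by (rule exp_increment_mono) (use that in \<open>auto simp: y'_def\<close>)
    then have "exp x + exp y \<le> exp X + exp y'" by (simp add: y'_def)
    also have "exp y' \<le> exp Y" using that by (simp add: y'_def)
    finally show ?thesis by simp
  qed
  have "exp (max x y) + exp (min x y) \<le> exp (max X Y) + exp (min X Y)"
    using assms by (intro sorted) (auto simp: max_def min_def)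
  then show ?thesis by (auto simp: max_def min_def split: if_splits)
qed

lemma exp_two_point_contraction:
  fixes a w p a' w' p' :: real
  assumes "\<bar>p\<bar> \<le> \<bar>w\<bar>" "\<bar>p'\<bar> \<le> \<bar>w'\<bar>" "\<bar>p - p'\<bar> \<le> \<bar>w - w'\<bar>"
  shows "\<exists>X\<in>{a + w, a' + w'}. \<exists>Y\<in>{a - w, a' - w'}. exp (a + p) + exp (a' - p') \<le> exp X + exp Y"
proof -
  have "\<exists>X\<in>{a + w, a' + w'}. \<exists>Y\<in>{a - w, a' - w'}.
      (a + p) + (a' - p') \<le> X + Y \<and> max (a + p) (a' - p') \<le> max X Y"
    using assms unfolding max_def by (auto simp: abs_if split: if_splits)
  then show ?thesis using exp_add_exp_le_of_majorized by blast
qed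

lemma exp_midpoint_le: "2 * exp ((x + y) / 2) \<le> exp x + exp (y :: real)"
proof -
  define u v where "u = exp (x / 2)" and "v = exp (y / 2)"
  have "exp ((x + y) / 2) = u * v" by (simp add: u_def v_def exp_add[symmetric] add_divide_distrib)
  moreover have "exp x = u\<^sup>2" "exp y = v\<^sup>2"
    by (simp_all add: u_def v_def power2_eq_square exp_add[symmetric])
  moreover have "0 \<le> (u - v)\<^sup>2" by simp
  ultimately show ?thesis by (simp add: power2_eq_square algebra_simps)
qed

lemma exp_add_exp_minus_le_exp_sq:
  fixes a :: real
  assumes "0 \<le> a"
  shows "exp a + exp (- a) \<le> 2 * exp (a\<^sup>2 / 2)"
proof -
  have "- (2 * a) * (1 / 2) + ln (1 + (1 / 2) * (exp (2 * a) - 1)) \<le> (2 * a)\<^sup>2 / 8"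
    using Hoeffdings_lemma_aux[of "2 * a" "1 / 2"] assms by simp
  then have "ln ((1 + exp (2 * a)) / 2) \<le> a + a\<^sup>2 / 2"
    by (simp add: power2_eq_square field_simps)
  then have "(1 + exp (2 * a)) / 2 \<le> exp (a + a\<^sup>2 / 2)"
    by (smt (verit) exp_ge_zero exp_le_cancel_iff exp_ln)
  then have "exp (- a) * ((1 + exp (2 * a)) / 2) \<le> exp (- a) * exp (a + a\<^sup>2 / 2)"
    by (intro mult_left_mono) auto
  moreover have "exp (- a) * ((1 + exp (2 * a)) / 2) = (exp a + exp (- a)) / 2"
    by (simp add: field_simps exp_add[symmetric] exp_minus mult_2)
  moreover have "exp (- a) * exp (a + a\<^sup>2 / 2) = exp (a\<^sup>2 / 2)"
    by (simp add: exp_add[symmetric])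
  ultimately show ?thesis by simp
qed

lemma exp_add_exp_minus_le_quadratic:
  fixes x :: real
  assumes "x\<^sup>2 \<le> 2"
  shows "exp x + exp (- x) \<le> 2 * (1 + x\<^sup>2)"
proof -
  define a where "a = \<bar>x\<bar>"
  have a2: "a\<^sup>2 = x\<^sup>2" by (simp add: a_def)
  have "exp x + exp (- x) = exp a + exp (- a)"
    by (cases "x \<ge> 0") (auto simp: a_def)
  also have "\<dots> \<le> 2 * exp (a\<^sup>2 / 2)" using exp_add_exp_minus_le_exp_sq[of a] by (simp add: a_def)
  also have "exp (a\<^sup>2 / 2) \<le> 1 + a\<^sup>2 / 2 + (a\<^sup>2 / 2)\<^sup>2"
    by (rule exp_bound) (use assms a2 in auto)
  also have "(a\<^sup>2 / 2)\<^sup>2 \<le> a\<^sup>2 / 2"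
  proof -
    have "(a\<^sup>2 / 2)\<^sup>2 = (a\<^sup>2 / 2) * (a\<^sup>2 / 2)" by (simp add: power2_eq_square)
    also have "\<dots> \<le> (a\<^sup>2 / 2) * 1" using assms a2 by (intro mult_left_mono) auto
    finally show ?thesis by simp
  qed
  finally show ?thesis using a2 by simp
qed

lemma exp_convex_comb_le:
  fixes q y :: "nat \<Rightarrow> real"
  assumes "finite J" "J \<noteq> {}" "(\<Sum>j\<in>J. q j) = 1" "\<And>j. j \<in> J \<Longrightarrow> q j \<ge> 0"
  shows "exp (\<Sum>j\<in>J. q j * y j) \<le> (\<Sum>j\<in>J. q j * exp (y j))"
  using convex_on_sum[OF assms(1,2) exp_convex assms(3,4), of y] by simp

lemma ennreal_exp_le_SUP_if_approx:
  fixes \<Phi> :: "'b \<Rightarrow> real"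
  assumes "\<And>e. e > 0 \<Longrightarrow> \<exists>r\<in>T. \<Phi> q \<le> \<Phi> r + e"
  shows "ennreal (exp (\<Phi> q)) \<le> (SUP r\<in>T. ennreal (exp (\<Phi> r)))"
proof (rule ennreal_le_epsilon)
  fix e :: real assume e: "0 < e"
  define a where "a = exp (\<Phi> q)"
  have a: "a > 0" by (simp add: a_def)
  obtain r where r: "r \<in> T" "\<Phi> q \<le> \<Phi> r + e / a" using assms[of "e / a"] e a by auto
  have "exp (\<Phi> q) \<le> exp (\<Phi> r) * exp (e / a)" using r(2) by (simp add: exp_add[symmetric])
  then have "a * exp (- (e / a)) \<le> exp (\<Phi> r)"
    by (simp add: a_def exp_minus field_simps)
  moreover have "a * (1 - e / a) \<le> a * exp (- (e / a))"
    using a exp_ge_add_one_self[of "- (e / a)"] by (intro mult_left_mono) auto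
  moreover have "a * (1 - e / a) = a - e" using a by (simp add: field_simps)
  ultimately have "a \<le> exp (\<Phi> r) + e" by linarith
  then have "ennreal a \<le> ennreal (exp (\<Phi> r)) + ennreal e"
    using e by (simp add: ennreal_plus[symmetric] del: ennreal_plus)
  also have "\<dots> \<le> (SUP r\<in>T. ennreal (exp (\<Phi> r))) + ennreal e"
    using r(1) by (intro add_mono SUP_upper) auto
  finally show "ennreal (exp (\<Phi> q)) \<le> (SUP r\<in>T. ennreal (exp (\<Phi> r))) + ennreal e"
    by (simp add: a_def)
qed

lemma ennreal_exp_integral_le_nn_integral_exp:
  assumes "prob_space N" and X: "X \<in> borel_measurable N"
    and bounded: "\<And>x. x \<in> space N \<Longrightarrow> \<bar>X x\<bar> \<le> B"
  shows "ennreal (exp (\<integral>x. X x \<partial>N)) \<le> (\<integral>\<^sup>+x. ennreal (exp (X x)) \<partial>N)"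
proof -
  interpret prob_space N by fact
  have int_X: "integrable N X"
    by (rule integrable_const_bound[where B = B]) (use bounded X in auto)
  have int_exp: "integrable N (\<lambda>x. exp (X x))"
  proof (rule integrable_const_bound[where B = "exp B"])
    show "AE x in N. norm (exp (X x)) \<le> exp B"
      using bounded by (intro AE_I2) (auto simp: abs_le_iff)
  qed (use X in measurable)
  define m where "m = (\<integral>x. X x \<partial>N)"
  have "(\<integral>x. exp m * (1 + (X x - m)) \<partial>N) \<le> (\<integral>x. exp (X x) \<partial>N)"
  proof (rule integral_mono)
    fix x
    have "exp m * (1 + (X x - m)) \<le> exp m * exp (X x - m)"
      by (intro mult_left_mono exp_ge_add_one_self) auto
    then show "exp m * (1 + (X x - m)) \<le> exp (X x)" by (simp add: exp_diff)
  qed (use int_X int_exp in auto)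
  moreover have "(\<integral>x. exp m * (1 + (X x - m)) \<partial>N) = exp m"
    using int_X prob_space by (simp add: m_def)
  moreover have "(\<integral>\<^sup>+x. ennreal (exp (X x)) \<partial>N) = ennreal (\<integral>x. exp (X x) \<partial>N)"
    by (rule nn_integral_eq_integral[OF int_exp]) auto
  ultimately show ?thesis by (simp add: m_def ennreal_leI)
qed

section \<open>Sign patterns and the contraction principle\<close>

text \<open>A set \<open>S \<subseteq> I\<close> encodes the sign vector \<open>\<epsilon>\<close> with \<open>\<epsilon>\<^sub>i = 1\<close> iff \<open>i \<in> S\<close>, so summing over
  \<open>Pow I\<close> is \<open>2\<^bsup>card I\<^esup>\<close> times the expectation over Rademacher signs.\<close>

definition sgn_of :: "nat set \<Rightarrow> nat \<Rightarrow> real" where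
  "sgn_of S i = (if i \<in> S then 1 else -1)"

lemma sum_Pow_insert:
  assumes "finite I" "i \<notin> I"
  shows "sum F (Pow (insert i I)) = (\<Sum>S\<in>Pow I. F S + F (insert i S))"
proof -
  have "inj_on (insert i) (Pow I)"
    using assms(2) by (auto simp: inj_on_def)
  moreover have "sum F (Pow (insert i I)) = sum F (Pow I) + sum F (insert i ` Pow I)"
    unfolding Pow_insert using assms by (intro sum.union_disjoint) auto
  ultimately show ?thesis by (simp add: sum.reindex sum.distrib)
qed

lemma sum_sgn_of_insert:
  assumes "finite I" "i \<notin> I" "S \<subseteq> I"
  shows "(\<Sum>j\<in>insert i I. sgn_of S j * x j) = (\<Sum>j\<in>I. sgn_of S j * x j) - x i"
    and "(\<Sum>j\<in>insert i I. sgn_of (insert i S) j * x j) = (\<Sum>j\<in>I. sgn_of S j * x j) + x i"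
proof -
  show "(\<Sum>j\<in>insert i I. sgn_of S j * x j) = (\<Sum>j\<in>I. sgn_of S j * x j) - x i"
    using assms by (auto simp: sgn_of_def)
  have "(\<Sum>j\<in>I. sgn_of (insert i S) j * x j) = (\<Sum>j\<in>I. sgn_of S j * x j)"
    using assms by (intro sum.cong) (auto simp: sgn_of_def)
  then show "(\<Sum>j\<in>insert i I. sgn_of (insert i S) j * x j) = (\<Sum>j\<in>I. sgn_of S j * x j) + x i"
    using assms by (simp add: sgn_of_def)
qed

lemma sum_Pow_exp_sgn_of:
  assumes "finite I"
  shows "(\<Sum>S\<in>Pow I. exp (\<Sum>i\<in>I. sgn_of S i * y i)) = (\<Prod>i\<in>I. exp (y i) + exp (- y i))"
  using assms
proof (induction I rule: finite_induct)
  case (insert i I)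
  have "(\<Sum>S\<in>Pow (insert i I). exp (\<Sum>j\<in>insert i I. sgn_of S j * y j))
      = (\<Sum>S\<in>Pow I. (exp (y i) + exp (- y i)) * exp (\<Sum>j\<in>I. sgn_of S j * y j))"
    unfolding sum_Pow_insert[OF insert.hyps]
  proof (intro sum.cong refl)
    fix S assume "S \<in> Pow I"
    then have "S \<subseteq> I" by simp
    then show "exp (\<Sum>j\<in>insert i I. sgn_of S j * y j) + exp (\<Sum>j\<in>insert i I. sgn_of (insert i S) j * y j)
        = (exp (y i) + exp (- y i)) * exp (\<Sum>j\<in>I. sgn_of S j * y j)"
      by (simp only: sum_sgn_of_insert[OF insert.hyps] exp_add exp_diff) (simp add: exp_minus field_simps)
  qed
  then show ?case using insert by (simp add: sum_distrib_left[symmetric])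
qed simp

lemma SUP_add_SUP_le_ennreal:
  fixes f g :: "'b \<Rightarrow> ennreal"
  assumes "\<And>t s. t \<in> T \<Longrightarrow> s \<in> T \<Longrightarrow> f t + g s \<le> R"
  shows "(SUP t\<in>T. f t) + (SUP s\<in>T. g s) \<le> R"
proof (cases "T = {}")
  case False
  have "(SUP t\<in>T. f t) + (SUP s\<in>T. g s) = (SUP t\<in>T. f t + (SUP s\<in>T. g s))"
    using False by (simp add: ennreal_SUP_add_left)
  also have "\<dots> = (SUP t\<in>T. SUP s\<in>T. f t + g s)"
    using False by (simp add: ennreal_SUP_add_right)
  also have "\<dots> \<le> R" using assms by (intro SUP_least) auto
  finally show ?thesis .
qed simp

lemma SUP_exp_contraction_step:
  fixes A p w :: "'b \<Rightarrow> real"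
  assumes "\<And>t. t \<in> T \<Longrightarrow> \<bar>p t\<bar> \<le> \<bar>w t\<bar>"
    and "\<And>t s. t \<in> T \<Longrightarrow> s \<in> T \<Longrightarrow> \<bar>p t - p s\<bar> \<le> \<bar>w t - w s\<bar>"
  shows "(SUP t\<in>T. ennreal (exp (A t - p t))) + (SUP t\<in>T. ennreal (exp (A t + p t)))
     \<le> (SUP t\<in>T. ennreal (exp (A t - w t))) + (SUP t\<in>T. ennreal (exp (A t + w t)))"
proof (rule SUP_add_SUP_le_ennreal)
  fix t s assume ts: "t \<in> T" "s \<in> T"
  obtain X Y where XY: "X \<in> {A s + w s, A t + w t}" "Y \<in> {A s - w s, A t - w t}"
    "exp (A s + p s) + exp (A t - p t) \<le> exp X + exp Y"
    using exp_two_point_contraction[of "p s" "w s" "p t" "w t" "A s" "A t"] assms ts by auto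
  have "ennreal (exp (A t - p t)) + ennreal (exp (A s + p s)) \<le> ennreal (exp Y) + ennreal (exp X)"
    using XY(3) by (metis add.commute ennreal_leI ennreal_plus exp_ge_zero)
  also have "\<dots> \<le> (SUP t\<in>T. ennreal (exp (A t - w t))) + (SUP t\<in>T. ennreal (exp (A t + w t)))"
    using XY(1,2) ts by (intro add_mono) (auto intro: SUP_upper2)
  finally show "ennreal (exp (A t - p t)) + ennreal (exp (A s + p s)) \<le> \<dots>" .
qed

text \<open>The Ledoux--Talagrand contraction principle, obtained one coordinate at a time from the
  two-point case.\<close>

lemma sum_Pow_SUP_exp_contraction:
  fixes p w :: "nat \<Rightarrow> 'b \<Rightarrow> real"
  assumes "finite I"
    and "\<And>i t. i \<in> I \<Longrightarrow> t \<in> T \<Longrightarrow> \<bar>p i t\<bar> \<le> \<bar>w i t\<bar>"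
    and "\<And>i t s. i \<in> I \<Longrightarrow> t \<in> T \<Longrightarrow> s \<in> T \<Longrightarrow> \<bar>p i t - p i s\<bar> \<le> \<bar>w i t - w i s\<bar>"
  shows "(\<Sum>S\<in>Pow I. SUP t\<in>T. ennreal (exp (A t + (\<Sum>i\<in>I. sgn_of S i * p i t))))
       \<le> (\<Sum>S\<in>Pow I. SUP t\<in>T. ennreal (exp (A t + (\<Sum>i\<in>I. sgn_of S i * w i t))))"
  using assms
proof (induction I arbitrary: A rule: finite_induct)
  case (insert i I)
  have split: "(\<Sum>S\<in>Pow (insert i I). SUP t\<in>T. ennreal (exp (B t + (\<Sum>j\<in>insert i I. sgn_of S j * v j t))))
     = (\<Sum>S\<in>Pow I. (SUP t\<in>T. ennreal (exp ((B t + (\<Sum>j\<in>I. sgn_of S j * v j t)) - v i t)))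
                  + (SUP t\<in>T. ennreal (exp ((B t + (\<Sum>j\<in>I. sgn_of S j * v j t)) + v i t))))"
    for B and v :: "nat \<Rightarrow> 'b \<Rightarrow> real"
    unfolding sum_Pow_insert[OF insert.hyps]
    by (intro sum.cong refl) (simp add: sum_sgn_of_insert[OF insert.hyps] add_diff_eq add.assoc)
  have "(\<Sum>S\<in>Pow (insert i I). SUP t\<in>T. ennreal (exp (A t + (\<Sum>j\<in>insert i I. sgn_of S j * p j t))))
     \<le> (\<Sum>S\<in>Pow I. (SUP t\<in>T. ennreal (exp ((A t + (\<Sum>j\<in>I. sgn_of S j * p j t)) - w i t)))
                  + (SUP t\<in>T. ennreal (exp ((A t + (\<Sum>j\<in>I. sgn_of S j * p j t)) + w i t))))"
    unfolding split using insert.prems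
    by (intro sum_mono SUP_exp_contraction_step) auto
  also have "\<dots> = (\<Sum>S\<in>Pow I. SUP t\<in>T. ennreal (exp ((A t - w i t) + (\<Sum>j\<in>I. sgn_of S j * p j t))))
                + (\<Sum>S\<in>Pow I. SUP t\<in>T. ennreal (exp ((A t + w i t) + (\<Sum>j\<in>I. sgn_of S j * p j t))))"
    by (simp add: sum.distrib algebra_simps)
  also have "\<dots> \<le> (\<Sum>S\<in>Pow I. SUP t\<in>T. ennreal (exp ((A t - w i t) + (\<Sum>j\<in>I. sgn_of S j * w j t))))
                + (\<Sum>S\<in>Pow I. SUP t\<in>T. ennreal (exp ((A t + w i t) + (\<Sum>j\<in>I. sgn_of S j * w j t))))"
    using insert.prems by (intro add_mono insert.IH) auto
  also have "\<dots> = (\<Sum>S\<in>Pow (insert i I). SUP t\<in>T. ennreal (exp (A t + (\<Sum>j\<in>insert i I. sgn_of S j * w j t))))"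
    unfolding split by (simp add: sum.distrib algebra_simps)
  finally show ?case .
qed simp

section \<open>Exchanging coordinates of two independent samples\<close>

definition swap_coords :: "nat set \<Rightarrow> (nat \<Rightarrow> 'z) \<times> (nat \<Rightarrow> 'z) \<Rightarrow> (nat \<Rightarrow> 'z) \<times> (nat \<Rightarrow> 'z)" where
  "swap_coords J x = ((\<lambda>i. if i \<in> J then snd x i else fst x i), (\<lambda>i. if i \<in> J then fst x i else snd x i))"

lemma measurable_merge_coords:
  "(\<lambda>x. (\<lambda>i. if i \<in> J then snd x i else fst x i)) \<in> measurable (PiM I M \<Otimes>\<^sub>M PiM I M) (PiM I M)"
proof (rule measurable_PiM_single')
  fix j assume "j \<in> I"
  then show "(\<lambda>x. if j \<in> J then snd x j else fst x j) \<in> measurable (PiM I M \<Otimes>\<^sub>M PiM I M) (M j)"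
    by (cases "j \<in> J") simp_all
qed (auto simp: space_pair_measure space_PiM PiE_iff extensional_def)

lemma measurable_swap_coords:
  "swap_coords J \<in> measurable (PiM I M \<Otimes>\<^sub>M PiM I M) (PiM I M \<Otimes>\<^sub>M PiM I M)"
proof -
  have eq: "(\<lambda>x. (\<lambda>i. if i \<in> J then fst x i else snd x i)) = (\<lambda>x. (\<lambda>i. if i \<in> - J then snd x i else fst x i))"
    by (auto simp: fun_eq_iff)
  have "(\<lambda>x. (\<lambda>i. if i \<in> J then fst x i else snd x i)) \<in> measurable (PiM I M \<Otimes>\<^sub>M PiM I M) (PiM I M)"
    by (subst eq) (rule measurable_merge_coords)
  then show ?thesis
    unfolding swap_coords_def using measurable_merge_coords[of J I M] by (rule measurable_Pair[rotated])
qed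

lemma measurable_update_coord:
  assumes "i \<in> J"
  shows "(\<lambda>x. (fst x)(i := snd x i)) \<in> measurable (PiM J M \<Otimes>\<^sub>M PiM J M) (PiM J M)"
proof -
  have eq: "(\<lambda>x. (fst x)(i := snd x i)) = (\<lambda>x. (\<lambda>k. if k \<in> {i} then snd x k else fst x k))"
    by (auto simp: fun_eq_iff)
  show ?thesis by (subst eq) (rule measurable_merge_coords)
qed

lemma nn_integral_PiM_insert_pair:
  fixes P :: "'z measure" and h :: "(nat \<Rightarrow> 'z) \<times> (nat \<Rightarrow> 'z) \<Rightarrow> ennreal"
  assumes P: "prob_space P" and I: "finite I" "i \<notin> I"
    and h[measurable]: "h \<in> borel_measurable (PiM (insert i I) (\<lambda>_. P) \<Otimes>\<^sub>M PiM (insert i I) (\<lambda>_. P))"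
  shows "(\<integral>\<^sup>+D. \<integral>\<^sup>+D'. h (D, D') \<partial>PiM (insert i I) (\<lambda>_. P) \<partial>PiM (insert i I) (\<lambda>_. P))
       = (\<integral>\<^sup>+x. \<integral>\<^sup>+a. \<integral>\<^sup>+x'. \<integral>\<^sup>+a'. h (x(i := a), x'(i := a')) \<partial>P \<partial>PiM I (\<lambda>_. P) \<partial>P \<partial>PiM I (\<lambda>_. P))"
proof -
  interpret PS: product_prob_space "\<lambda>_::nat. P" by (rule product_prob_spaceI) (rule P)
  let ?O = "PiM (insert i I) (\<lambda>_. P)" and ?I = "PiM I (\<lambda>_. P)"
  interpret PO: sigma_finite_measure ?O by (intro prob_space_imp_sigma_finite prob_space_PiM P)
  have "(\<lambda>D. \<integral>\<^sup>+D'. h (D, D') \<partial>?O) \<in> borel_measurable ?O"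
    by (intro PO.borel_measurable_nn_integral) simp
  then have "(\<integral>\<^sup>+D. \<integral>\<^sup>+D'. h (D, D') \<partial>?O \<partial>?O) = (\<integral>\<^sup>+x. \<integral>\<^sup>+a. \<integral>\<^sup>+D'. h (x(i := a), D') \<partial>?O \<partial>P \<partial>?I)"
    by (rule PS.product_nn_integral_insert[OF I])
  also have "\<dots> = (\<integral>\<^sup>+x. \<integral>\<^sup>+a. \<integral>\<^sup>+x'. \<integral>\<^sup>+a'. h (x(i := a), x'(i := a')) \<partial>P \<partial>?I \<partial>P \<partial>?I)"
  proof (intro nn_integral_cong)
    fix x a assume "x \<in> space ?I" and "a \<in> space P"
    then have "x(i := a) \<in> space ?O"
      using measurable_component_update[of x I "\<lambda>_. P" i] I(2) by (auto simp: measurable_def)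
    then have "(\<lambda>D'. h (x(i := a), D')) \<in> borel_measurable ?O" by measurable
    then show "(\<integral>\<^sup>+D'. h (x(i := a), D') \<partial>?O) = (\<integral>\<^sup>+x'. \<integral>\<^sup>+a'. h (x(i := a), x'(i := a')) \<partial>P \<partial>?I)"
      by (rule PS.product_nn_integral_insert[OF I])
  qed
  finally show ?thesis .
qed

lemma nn_integral_swap_coord:
  fixes P :: "'z measure" and h :: "(nat \<Rightarrow> 'z) \<times> (nat \<Rightarrow> 'z) \<Rightarrow> ennreal"
  assumes P: "prob_space P" and I: "finite I" "i \<notin> I"
    and h[measurable]: "h \<in> borel_measurable (PiM (insert i I) (\<lambda>_. P) \<Otimes>\<^sub>M PiM (insert i I) (\<lambda>_. P))"
  shows "(\<integral>\<^sup>+D. \<integral>\<^sup>+D'. h (D(i := D' i), D'(i := D i)) \<partial>PiM (insert i I) (\<lambda>_. P) \<partial>PiM (insert i I) (\<lambda>_. P))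
       = (\<integral>\<^sup>+D. \<integral>\<^sup>+D'. h (D, D') \<partial>PiM (insert i I) (\<lambda>_. P) \<partial>PiM (insert i I) (\<lambda>_. P))"
proof -
  interpret prob_space P by fact
  interpret PS: product_prob_space "\<lambda>_::nat. P" by (rule product_prob_spaceI) (rule P)
  interpret PP: pair_sigma_finite P P by unfold_locales
  interpret PI: pair_sigma_finite P "PiM I (\<lambda>_. P)"
    by (intro pair_sigma_finite.intro sigma_finite_measure_axioms) (simp add: PS.sigma_finite_measure_axioms)
  let ?O = "PiM (insert i I) (\<lambda>_. P)" and ?I = "PiM I (\<lambda>_. P)"
  have swapped[measurable]: "(\<lambda>x. h ((fst x)(i := snd x i), (snd x)(i := fst x i))) \<in> borel_measurable (?O \<Otimes>\<^sub>M ?O)"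
    using measurable_update_coord[of i "insert i I" "\<lambda>_. P"]
      measurable_comp[OF measurable_pair_swap' measurable_update_coord[of i "insert i I" "\<lambda>_. P"]]
    by (simp add: comp_def split_beta)
  have "(\<integral>\<^sup>+a. \<integral>\<^sup>+x'. \<integral>\<^sup>+a'. h (x(i := a'), x'(i := a)) \<partial>P \<partial>?I \<partial>P)
      = (\<integral>\<^sup>+a. \<integral>\<^sup>+x'. \<integral>\<^sup>+a'. h (x(i := a), x'(i := a')) \<partial>P \<partial>?I \<partial>P)"
    if x: "x \<in> space ?I" for x
  proof -
    have [measurable]: "(\<lambda>a. x(i := a)) \<in> measurable P ?O"
      using measurable_component_update[OF x I(2)] .
    have "(\<integral>\<^sup>+a. \<integral>\<^sup>+x'. \<integral>\<^sup>+a'. h (x(i := a'), x'(i := a)) \<partial>P \<partial>?I \<partial>P)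
        = (\<integral>\<^sup>+x'. \<integral>\<^sup>+a. \<integral>\<^sup>+a'. h (x(i := a'), x'(i := a)) \<partial>P \<partial>P \<partial>?I)"
      by (rule PI.Fubini'[symmetric]) measurable
    also have "\<dots> = (\<integral>\<^sup>+x'. \<integral>\<^sup>+a. \<integral>\<^sup>+a'. h (x(i := a), x'(i := a')) \<partial>P \<partial>P \<partial>?I)"
    proof (rule nn_integral_cong)
      fix x' assume x': "x' \<in> space ?I"
      have [measurable]: "(\<lambda>a. x'(i := a)) \<in> measurable P ?O"
        using measurable_component_update[OF x' I(2)] .
      show "(\<integral>\<^sup>+a. \<integral>\<^sup>+a'. h (x(i := a'), x'(i := a)) \<partial>P \<partial>P) = (\<integral>\<^sup>+a. \<integral>\<^sup>+a'. h (x(i := a), x'(i := a')) \<partial>P \<partial>P)"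
        by (rule PP.Fubini') measurable
    qed
    also have "\<dots> = (\<integral>\<^sup>+a. \<integral>\<^sup>+x'. \<integral>\<^sup>+a'. h (x(i := a), x'(i := a')) \<partial>P \<partial>?I \<partial>P)"
      by (rule PI.Fubini') measurable
    finally show ?thesis .
  qed
  then show ?thesis
    using nn_integral_PiM_insert_pair[OF P I h]
      nn_integral_PiM_insert_pair[OF P I swapped]
    by (simp cong: nn_integral_cong)
qed

lemma nn_integral_swap_coords:
  fixes P :: "'z measure" and h :: "(nat \<Rightarrow> 'z) \<times> (nat \<Rightarrow> 'z) \<Rightarrow> ennreal"
  assumes P: "prob_space P" and I: "finite I" and J: "J \<subseteq> I"
    and h: "h \<in> borel_measurable (PiM I (\<lambda>_. P) \<Otimes>\<^sub>M PiM I (\<lambda>_. P))"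
  shows "(\<integral>\<^sup>+D. \<integral>\<^sup>+D'. h (swap_coords J (D, D')) \<partial>PiM I (\<lambda>_. P) \<partial>PiM I (\<lambda>_. P))
       = (\<integral>\<^sup>+D. \<integral>\<^sup>+D'. h (D, D') \<partial>PiM I (\<lambda>_. P) \<partial>PiM I (\<lambda>_. P))"
proof -
  have "finite J" using J I by (rule finite_subset)
  then show ?thesis using J
  proof (induction J rule: finite_induct)
    case (insert j J)
    then have j: "j \<in> I" and "J \<subseteq> I" by auto
    have "swap_coords (insert j J) (D, D') = swap_coords J (D(j := D' j), D'(j := D j))" for D D' :: "nat \<Rightarrow> 'z"
      using insert.hyps by (auto simp: swap_coords_def)
    then have "(\<integral>\<^sup>+D. \<integral>\<^sup>+D'. h (swap_coords (insert j J) (D, D')) \<partial>PiM I (\<lambda>_. P) \<partial>PiM I (\<lambda>_. P))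
        = (\<integral>\<^sup>+D. \<integral>\<^sup>+D'. h (swap_coords J (D(j := D' j), D'(j := D j))) \<partial>PiM I (\<lambda>_. P) \<partial>PiM I (\<lambda>_. P))"
      by simp
    also have "\<dots> = (\<integral>\<^sup>+D. \<integral>\<^sup>+D'. h (swap_coords J (D, D')) \<partial>PiM I (\<lambda>_. P) \<partial>PiM I (\<lambda>_. P))"
      using nn_integral_swap_coord[OF P, of "I - {j}" j "\<lambda>x. h (swap_coords J x)"] I
        measurable_comp[OF measurable_swap_coords h]
      by (simp add: insert_absorb[OF j] comp_def)
    also have "\<dots> = (\<integral>\<^sup>+D. \<integral>\<^sup>+D'. h (D, D') \<partial>PiM I (\<lambda>_. P) \<partial>PiM I (\<lambda>_. P))"
      using insert.IH \<open>J \<subseteq> I\<close> by simp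
    finally show ?case .
  qed (simp add: swap_coords_def)
qed

section \<open>A countable dense subset of the simplex\<close>

lemma Theta_imp_pos: "q \<in> Theta M \<Longrightarrow> M > 0"
  by (auto simp: Theta_def intro: Nat.gr0I)

lemma Theta_le_one:
  assumes "q \<in> Theta M" "j < M"
  shows "q j \<le> 1"
proof -
  have "q j \<le> (\<Sum>i<M. q i)"
    using assms by (intro member_le_sum) (auto simp: Theta_def)
  then show ?thesis using assms by (simp add: Theta_def)
qed

text \<open>Suprema over \<open>Theta M\<close> are taken over this set instead, so that they remain measurable.\<close>

definition Theta_rat :: "nat \<Rightarrow> (nat \<Rightarrow> real) set" where
  "Theta_rat M = {q \<in> Theta M. (\<forall>j<M. q j \<in> \<rat>) \<and> (\<forall>j\<ge>M. q j = 0)}"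

lemma Theta_rat_subset: "Theta_rat M \<subseteq> Theta M"
  by (auto simp: Theta_rat_def)

lemma countable_Theta_rat: "countable (Theta_rat M)"
proof -
  define vec :: "rat list \<Rightarrow> nat \<Rightarrow> real" where
    "vec xs j = (if j < length xs then of_rat (xs ! j) else 0)" for xs j
  have "Theta_rat M \<subseteq> range vec"
  proof
    fix q assume q: "q \<in> Theta_rat M"
    have "\<forall>j<M. \<exists>r. q j = of_rat r"
      using q by (fastforce simp: Theta_rat_def Rats_def)
    then obtain g where g: "\<And>j. j < M \<Longrightarrow> q j = of_rat (g j)" by metis
    have "vec (map g [0..<M]) = q"
      using g q by (auto simp: fun_eq_iff vec_def Theta_rat_def)
    then show "q \<in> range vec" by (metis rangeI)
  qed
  then show ?thesis by (rule countable_subset) simp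
qed

lemma Theta_rat_dense:
  assumes q: "q \<in> Theta M" and d: "d > 0"
  shows "\<exists>r\<in>Theta_rat M. (\<Sum>j<M. \<bar>q j - r j\<bar>) \<le> d"
proof -
  have M: "M > 0" using Theta_imp_pos[OF q] .
  have q_sum: "(\<Sum>j<M. q j) = 1" and q_nonneg: "\<And>j. j < M \<Longrightarrow> q j \<ge> 0"
    using q by (auto simp: Theta_def)
  define e where "e = d / (2 * real M)"
  have e: "e > 0" using d M by (simp add: e_def)
  have "\<forall>j. \<exists>x. j < M \<longrightarrow> x \<in> \<rat> \<and> q j < x \<and> x < q j + e"
    using Rats_dense_in_real[of "q j" "q j + e" for j] e by auto
  then obtain \<rho> where \<rho>: "\<And>j. j < M \<Longrightarrow> \<rho> j \<in> \<rat> \<and> q j < \<rho> j \<and> \<rho> j < q j + e"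
    by metis
  have \<rho>_nonneg: "\<rho> j \<ge> 0" if "j < M" for j using \<rho>[OF that] q_nonneg[OF that] by linarith
  define S where "S = (\<Sum>j<M. \<rho> j)"
  have S_gt: "S > 1"
    using sum_strict_mono[of "{..<M}" q \<rho>] \<rho> M q_sum by (auto simp: S_def)
  have S_le: "S - 1 \<le> real M * e"
    using sum_mono[of "{..<M}" \<rho> "\<lambda>j. q j + e"] \<rho> q_sum by (auto simp: S_def sum.distrib less_imp_le)
  have S_rat: "S \<in> \<rat>" unfolding S_def using \<rho> by (intro Rats_sum) auto
  define r where "r j = (if j < M then \<rho> j / S else 0)" for j
  have "(\<Sum>j<M. r j) = 1"
    using S_gt by (simp add: r_def S_def flip: sum_divide_distrib)
  then have r: "r \<in> Theta_rat M"
    using \<rho> \<rho>_nonneg S_gt S_rat by (auto simp: Theta_rat_def Theta_def r_def Rats_divide)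
  have "(\<Sum>j<M. \<bar>q j - r j\<bar>) \<le> (\<Sum>j<M. (\<rho> j - q j) + \<rho> j * (1 - 1 / S))"
  proof (intro sum_mono)
    fix j assume j: "j \<in> {..<M}"
    have "\<rho> j / S \<le> \<rho> j" using \<rho>_nonneg[of j] j S_gt by (simp add: divide_le_eq mult_le_cancel_left1)
    moreover have "\<rho> j - \<rho> j / S = \<rho> j * (1 - 1 / S)" by (simp add: algebra_simps)
    ultimately show "\<bar>q j - r j\<bar> \<le> (\<rho> j - q j) + \<rho> j * (1 - 1 / S)"
      using \<rho>[of j] j \<rho>_nonneg[of j] S_gt by (auto simp: r_def abs_le_iff)
  qed
  also have "\<dots> = (S - 1) + S * (1 - 1 / S)"
    using q_sum by (simp add: sum.distrib sum_subtractf S_def sum_distrib_right[symmetric])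
  also have "\<dots> = 2 * (S - 1)" using S_gt by (simp add: field_simps)
  also have "\<dots> \<le> d" using S_le M by (simp add: e_def)
  finally show ?thesis using r by blast
qed

lemma ennreal_exp_le_SUP_Theta_rat:
  fixes \<Phi> :: "(nat \<Rightarrow> real) \<Rightarrow> real"
  assumes q: "q \<in> Theta M" and L: "L \<ge> 0"
    and lipschitz: "\<And>r. r \<in> Theta M \<Longrightarrow> \<Phi> q \<le> \<Phi> r + L * (\<Sum>j<M. \<bar>q j - r j\<bar>)"
  shows "ennreal (exp (\<Phi> q)) \<le> (SUP r\<in>Theta_rat M. ennreal (exp (\<Phi> r)))"
proof (rule ennreal_exp_le_SUP_if_approx)
  fix e :: real assume e: "e > 0"
  obtain r where r: "r \<in> Theta_rat M" "(\<Sum>j<M. \<bar>q j - r j\<bar>) \<le> e / (L + 1)"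
    using Theta_rat_dense[OF q, of "e / (L + 1)"] e L by auto
  have "\<Phi> q \<le> \<Phi> r + L * (\<Sum>j<M. \<bar>q j - r j\<bar>)" using lipschitz r(1) Theta_rat_subset by auto
  also have "L * (\<Sum>j<M. \<bar>q j - r j\<bar>) \<le> L * (e / (L + 1))" using r(2) L by (intro mult_left_mono)
  also have "L * (e / (L + 1)) \<le> e" using L e by (simp add: field_simps)
  finally show "\<exists>r\<in>Theta_rat M. \<Phi> q \<le> \<Phi> r + e" using r(1) by auto
qed

locale aggregation_setting =
  fixes P :: "('a \<times> real) measure"
    and n M :: nat
    and f :: "nat \<Rightarrow> 'a \<Rightarrow> real"
    and loss :: "real \<Rightarrow> real \<Rightarrow> real"
    and b C \<nu> \<mu> s :: real
    and pr :: "nat \<Rightarrow> real"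
    and \<theta>s :: "nat \<Rightarrow> real"
  assumes P: "prob_space P"
    and b: "b > 0"
    and C: "C > 0"
    and snd_meas: "snd \<in> borel_measurable P"
    and f_meas: "\<And>j. j < M \<Longrightarrow> (\<lambda>z. f j (fst z)) \<in> borel_measurable P"
    and loss_meas: "(\<lambda>(y, t). loss y t) \<in> borel_measurable borel"
    and f_bdd: "AE z in P. \<forall>j<M. \<bar>f j (fst z)\<bar> \<le> b"
    and lipschitz: "AE z in P. \<forall>u\<in>{-b..b}. \<forall>v\<in>{-b..b}.
                      \<bar>loss (snd z) u - loss (snd z) v\<bar> \<le> C * \<bar>u - v\<bar>"
    and pr_pos: "\<And>j. j < M \<Longrightarrow> pr j > 0"
    and pr_sum: "(\<Sum>j<M. pr j) = 1"
    and \<nu>: "0 < \<nu>" "\<nu> < 1"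
    and \<mu>: "\<mu> > 0"
    and \<theta>s: "\<theta>s \<in> Theta M"
    and s_pos: "s > 0"
    and s1: "s \<le> \<mu> * real n / (2 * C * (1 - \<nu>))\<^sup>2"
    and s2: "s < real n / (2 * sqrt 3 * b * C * (1 - \<nu>))"
begin

interpretation P: prob_space P by (rule P)

definition sample :: "(nat \<Rightarrow> 'a \<times> real) measure" where
  "sample = PiM {..<n} (\<lambda>_. P)"

interpretation sample: prob_space sample
  unfolding sample_def by (intro prob_space_PiM P)

definition objective :: "(nat \<Rightarrow> real) \<Rightarrow> (nat \<Rightarrow> 'a \<times> real) \<Rightarrow> real" where
  "objective q D =
     s * ((1 - \<nu>) *
            ((\<integral>z. loss (snd z) (f_theta M f q (fst z)) - loss (snd z) (f_theta M f \<theta>s (fst z)) \<partial>P)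
             - (1 / real n) * (\<Sum>i<n. loss (snd (D i)) (f_theta M f q (fst (D i)))
                                   - loss (snd (D i)) (f_theta M f \<theta>s (fst (D i)))))
          - \<mu> * (\<Sum>j<M. q j * (\<integral>z. (f j (fst z) - f_theta M f \<theta>s (fst z))\<^sup>2 \<partial>P)))
     - Kfun M pr q"

definition good_point :: "'a \<times> real \<Rightarrow> bool" where
  "good_point z \<longleftrightarrow> (\<forall>j<M. \<bar>f j (fst z)\<bar> \<le> b) \<and>
     (\<forall>u\<in>{-b..b}. \<forall>v\<in>{-b..b}. \<bar>loss (snd z) u - loss (snd z) v\<bar> \<le> C * \<bar>u - v\<bar>)"

text \<open>The functions below are truncated to \<open>0\<close> outside this measurable set of full measure,
  so that their bounds hold everywhere rather than almost everywhere.\<close>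

definition good :: "('a \<times> real) set" where
  "good = space P - (SOME N. N \<in> null_sets P \<and> (\<forall>z \<in> space P - N. good_point z))"

lemma good_complement: "space P - good \<in> null_sets P" "\<And>z. z \<in> good \<Longrightarrow> good_point z"
proof -
  have "AE z in P. good_point z"
    using f_bdd lipschitz unfolding good_point_def by eventually_elim auto
  then have "\<exists>N. N \<in> null_sets P \<and> (\<forall>z \<in> space P - N. good_point z)"
    unfolding eventually_ae_filter by blast
  from someI_ex[OF this] obtain N where N: "N \<in> null_sets P" "\<forall>z \<in> space P - N. good_point z"
    and good: "good = space P - N"
    unfolding good_def by blast
  have "space P - good = N" using sets.sets_into_space[OF null_setsD2[OF N(1)]] good by auto
  with N good show "space P - good \<in> null_sets P" "\<And>z. z \<in> good \<Longrightarrow> good_point z" by auto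
qed

lemma good_in_sets[measurable]: "good \<in> sets P"
proof -
  have "good = space P - (space P - good)" by (auto simp: good_def)
  then show ?thesis using good_complement(1) by (metis null_setsD2 sets.compl_sets)
qed

lemma AE_in_good: "AE z in P. z \<in> good"
  using AE_not_in[OF good_complement(1)] by (auto elim: eventually_mono)

lemma good_dict_bound: "z \<in> good \<Longrightarrow> j < M \<Longrightarrow> \<bar>f j (fst z)\<bar> \<le> b"
  using good_complement(2) by (auto simp: good_point_def)

lemma good_lipschitz:
  "z \<in> good \<Longrightarrow> \<bar>u\<bar> \<le> b \<Longrightarrow> \<bar>v\<bar> \<le> b \<Longrightarrow> \<bar>loss (snd z) u - loss (snd z) v\<bar> \<le> C * \<bar>u - v\<bar>"
  using good_complement(2) by (auto simp: good_point_def abs_le_iff)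

lemma AE_sample_good: "AE D in sample. \<forall>i\<in>{..<n}. D i \<in> good"
proof (intro eventually_ball_finite ballI)
  fix i assume "i \<in> {..<n}"
  then show "AE D in sample. D i \<in> good"
    unfolding sample_def by (rule AE_PiM_component[OF P _ AE_in_good])
qed simp

lemma f_theta_bound:
  assumes q: "q \<in> Theta M" and z: "z \<in> good"
  shows "\<bar>f_theta M f q (fst z)\<bar> \<le> b"
proof -
  have "\<bar>f_theta M f q (fst z)\<bar> \<le> (\<Sum>j<M. \<bar>q j * f j (fst z)\<bar>)"
    unfolding f_theta_def by (rule sum_abs)
  also have "\<dots> \<le> (\<Sum>j<M. q j * b)"
    using q good_dict_bound[OF z] by (intro sum_mono) (auto simp: Theta_def abs_mult intro: mult_left_mono)
  also have "\<dots> = b" using q by (simp add: Theta_def sum_distrib_right[symmetric])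
  finally show ?thesis .
qed

lemma f_theta_diff_bound:
  assumes "z \<in> good"
  shows "\<bar>f_theta M f q (fst z) - f_theta M f r (fst z)\<bar> \<le> b * (\<Sum>j<M. \<bar>q j - r j\<bar>)"
proof -
  have "\<bar>f_theta M f q (fst z) - f_theta M f r (fst z)\<bar> = \<bar>\<Sum>j<M. (q j - r j) * f j (fst z)\<bar>"
    unfolding f_theta_def by (simp add: sum_subtractf left_diff_distrib)
  also have "\<dots> \<le> (\<Sum>j<M. \<bar>(q j - r j) * f j (fst z)\<bar>)" by (rule sum_abs)
  also have "\<dots> \<le> (\<Sum>j<M. \<bar>q j - r j\<bar> * b)"
    using good_dict_bound[OF assms] by (intro sum_mono) (auto simp: abs_mult intro: mult_left_mono)
  finally show ?thesis by (simp add: sum_distrib_left mult.commute)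
qed

definition excess_loss :: "(nat \<Rightarrow> real) \<Rightarrow> 'a \<times> real \<Rightarrow> real" where
  "excess_loss q z = (if z \<in> good
     then loss (snd z) (f_theta M f q (fst z)) - loss (snd z) (f_theta M f \<theta>s (fst z)) else 0)"

definition dict_dev :: "nat \<Rightarrow> 'a \<times> real \<Rightarrow> real" where
  "dict_dev j z = (if z \<in> good then f j (fst z) - f_theta M f \<theta>s (fst z) else 0)"

definition pred_dev :: "'a \<times> real \<Rightarrow> (nat \<Rightarrow> real) \<Rightarrow> real" where
  "pred_dev z q = (\<Sum>j<M. q j * dict_dev j z)"

definition dist_sq :: "nat \<Rightarrow> real" where
  "dist_sq j = (\<integral>z. (f j (fst z) - f_theta M f \<theta>s (fst z))\<^sup>2 \<partial>P)"

definition penalty :: "(nat \<Rightarrow> real) \<Rightarrow> real" where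
  "penalty q = s * \<mu> * (\<Sum>j<M. q j * dist_sq j) + Kfun M pr q"

lemma f_theta_measurable[measurable]: "(\<lambda>z. f_theta M f q (fst z)) \<in> borel_measurable P"
  unfolding f_theta_def
  by (intro borel_measurable_sum borel_measurable_times borel_measurable_const) (auto intro: f_meas)

lemma loss_measurable:
  assumes "a \<in> borel_measurable P" "c \<in> borel_measurable P"
  shows "(\<lambda>z. loss (a z) (c z)) \<in> borel_measurable P"
proof -
  have "(\<lambda>(y, t). loss y t) \<in> borel_measurable (borel \<Otimes>\<^sub>M borel)"
    using loss_meas by (simp add: borel_prod)
  from measurable_comp[OF measurable_Pair[OF assms] this] show ?thesis by (simp add: comp_def)
qed

lemma loss_diff_measurable:
  "(\<lambda>z. loss (snd z) (f_theta M f q (fst z)) - loss (snd z) (f_theta M f \<theta>s (fst z))) \<in> borel_measurable P"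
  by (intro borel_measurable_diff loss_measurable) (auto intro: snd_meas)

lemma excess_loss_measurable[measurable]: "excess_loss q \<in> borel_measurable P"
  unfolding excess_loss_def using loss_diff_measurable by measurable

lemma dict_dev_measurable[measurable]: "j < M \<Longrightarrow> dict_dev j \<in> borel_measurable P"
  unfolding dict_dev_def using f_meas by measurable

lemma dict_dev_bound: "j < M \<Longrightarrow> \<bar>dict_dev j z\<bar> \<le> 2 * b"
  using good_dict_bound[of z j] f_theta_bound[OF \<theta>s, of z] b by (auto simp: dict_dev_def)

lemma integral_dict_dev_sq: "j < M \<Longrightarrow> (\<integral>z. (dict_dev j z)\<^sup>2 \<partial>P) = dist_sq j"
  unfolding dist_sq_def
  by (rule integral_cong_AE) (use AE_in_good f_meas in \<open>auto simp: dict_dev_def elim!: eventually_mono\<close>)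

lemma dist_sq_nonneg: "dist_sq j \<ge> 0"
  unfolding dist_sq_def by simp

lemma pred_dev_eq:
  assumes "q \<in> Theta M" "z \<in> good"
  shows "pred_dev z q = f_theta M f q (fst z) - f_theta M f \<theta>s (fst z)"
proof -
  have "pred_dev z q = (\<Sum>j<M. q j * f j (fst z)) - (\<Sum>j<M. q j) * f_theta M f \<theta>s (fst z)"
    using assms by (simp add: pred_dev_def dict_dev_def right_diff_distrib sum_subtractf sum_distrib_right)
  then show ?thesis using assms by (simp add: Theta_def f_theta_def)
qed

lemma excess_loss_lipschitz:
  assumes "q \<in> Theta M" "r \<in> Theta M"
  shows "\<bar>excess_loss q z - excess_loss r z\<bar> \<le> C * \<bar>pred_dev z q - pred_dev z r\<bar>"
proof (cases "z \<in> good")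
  case True
  then show ?thesis
    using good_lipschitz[OF True f_theta_bound[OF assms(1) True] f_theta_bound[OF assms(2) True]]
    by (simp add: excess_loss_def pred_dev_eq[OF assms(1) True] pred_dev_eq[OF assms(2) True])
qed (use C in \<open>simp add: excess_loss_def pred_dev_def dict_dev_def\<close>)

lemma abs_excess_loss_le: "q \<in> Theta M \<Longrightarrow> \<bar>excess_loss q z\<bar> \<le> C * \<bar>pred_dev z q\<bar>"
  using excess_loss_lipschitz[OF _ \<theta>s, of q z] pred_dev_eq[OF \<theta>s, of z]
  by (cases "z \<in> good") (simp_all add: excess_loss_def pred_dev_def dict_dev_def)

lemma excess_loss_diff_bound:
  assumes "q \<in> Theta M" "r \<in> Theta M"
  shows "\<bar>excess_loss q z - excess_loss r z\<bar> \<le> C * b * (\<Sum>j<M. \<bar>q j - r j\<bar>)"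
proof (cases "z \<in> good")
  case True
  have "\<bar>excess_loss q z - excess_loss r z\<bar>
      \<le> C * \<bar>f_theta M f q (fst z) - f_theta M f r (fst z)\<bar>"
    using good_lipschitz[OF True f_theta_bound[OF assms(1) True] f_theta_bound[OF assms(2) True]]
    by (simp add: excess_loss_def True)
  also have "\<dots> \<le> C * (b * (\<Sum>j<M. \<bar>q j - r j\<bar>))"
    using C f_theta_diff_bound[OF True] by (intro mult_left_mono) auto
  finally show ?thesis by simp
qed (use C b in \<open>simp add: excess_loss_def sum_nonneg\<close>)

lemma excess_loss_bound:
  assumes q: "q \<in> Theta M"
  shows "\<bar>excess_loss q z\<bar> \<le> 2 * C * b"
proof -
  have "(\<Sum>j<M. \<bar>q j - \<theta>s j\<bar>) \<le> (\<Sum>j<M. q j + \<theta>s j)"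
    using q \<theta>s by (intro sum_mono) (fastforce simp: Theta_def)
  also have "\<dots> = 2" using q \<theta>s by (simp add: Theta_def sum.distrib)
  finally have "C * b * (\<Sum>j<M. \<bar>q j - \<theta>s j\<bar>) \<le> C * b * 2"
    using C b by (intro mult_left_mono) auto
  moreover have "excess_loss \<theta>s z = 0" by (simp add: excess_loss_def)
  ultimately show ?thesis
    using excess_loss_diff_bound[OF q \<theta>s, of z] by (simp add: mult_ac)
qed

definition penalty_lip :: real where
  "penalty_lip = (\<Sum>j<M. \<bar>s * \<mu> * dist_sq j + ln (1 / pr j)\<bar>)"

lemma penalty_diff_bound:
  assumes "q \<in> Theta M" "r \<in> Theta M"
  shows "\<bar>penalty q - penalty r\<bar> \<le> penalty_lip * (\<Sum>j<M. \<bar>q j - r j\<bar>)"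
proof -
  define w where "w j = s * \<mu> * dist_sq j + ln (1 / pr j)" for j
  have "penalty q - penalty r = (\<Sum>j<M. (q j - r j) * w j)"
    unfolding penalty_def Kfun_def w_def
    by (simp add: sum_distrib_left sum_subtractf[symmetric] sum.distrib[symmetric] algebra_simps)
  then have "\<bar>penalty q - penalty r\<bar> \<le> (\<Sum>j<M. \<bar>(q j - r j) * w j\<bar>)"
    by (simp add: sum_abs)
  also have "\<dots> \<le> (\<Sum>j<M. \<bar>q j - r j\<bar> * penalty_lip)"
    unfolding abs_mult penalty_lip_def w_def
    by (intro sum_mono mult_left_mono member_le_sum[where f = "\<lambda>j. \<bar>s * \<mu> * dist_sq j + ln (1 / pr j)\<bar>"]) auto
  finally show ?thesis by (simp add: sum_distrib_right[symmetric] mult.commute)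
qed

lemma penalty_lip_nonneg: "penalty_lip \<ge> 0"
  unfolding penalty_lip_def by (intro sum_nonneg) auto

lemma n_pos: "n > 0"
  using s1 s_pos by (cases n) auto

definition lam :: real where "lam = s * (1 - \<nu>)"

text \<open>The Lipschitz constant of the process after contraction.\<close>

definition kap :: real where "kap = 2 * lam * C / real n"

lemma lam_pos: "lam > 0"
  using s_pos \<nu> by (simp add: lam_def)

lemma kap_pos: "kap > 0"
  using lam_pos C n_pos by (simp add: kap_def)

lemma kap_b_sq: "(kap * b)\<^sup>2 * 3 \<le> 1"
proof -
  have "2 * sqrt 3 * b * C * (1 - \<nu>) > 0" using b C \<nu> by simp
  then have "s * (2 * sqrt 3 * b * C * (1 - \<nu>)) < real n"
    using s2 by (simp add: less_divide_eq)
  then have "kap * b * sqrt 3 < 1"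
    using n_pos by (simp add: kap_def lam_def field_simps)
  moreover have "kap * b * sqrt 3 \<ge> 0" using kap_pos b by simp
  ultimately have "(kap * b * sqrt 3)\<^sup>2 \<le> 1\<^sup>2"
    by (intro power_mono) auto
  then show ?thesis by (simp add: power_mult_distrib)
qed

lemma n_kap_sq_le: "real n * kap\<^sup>2 \<le> s * \<mu>"
proof -
  have "(2 * C * (1 - \<nu>))\<^sup>2 > 0" using C \<nu> by simp
  then have bound: "s * (2 * C * (1 - \<nu>))\<^sup>2 \<le> \<mu> * real n" using s1 by (simp add: le_divide_eq)
  have "real n * kap\<^sup>2 = s * (s * (2 * C * (1 - \<nu>))\<^sup>2) / real n"
    using n_pos by (simp add: kap_def lam_def power2_eq_square)
  also have "\<dots> \<le> s * (\<mu> * real n) / real n"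
    using s_pos n_pos bound by (intro divide_right_mono mult_left_mono) auto
  finally show ?thesis using n_pos by simp
qed

subsection \<open>Jensen's inequality over a ghost sample\<close>

definition sym_sup :: "(nat \<Rightarrow> 'a \<times> real) \<times> (nat \<Rightarrow> 'a \<times> real) \<Rightarrow> ennreal" where
  "sym_sup x = (SUP q\<in>Theta_rat M. ennreal (exp (lam / real n *
     (\<Sum>i<n. excess_loss q (snd x i) - excess_loss q (fst x i)) - penalty q)))"

lemma measurable_sample_component:
  "g \<in> borel_measurable P \<Longrightarrow> (\<lambda>D. g (D i)) \<in> borel_measurable sample"
proof (cases "i < n")
  case True
  assume "g \<in> borel_measurable P"
  then show ?thesis
    unfolding sample_def using True by (intro measurable_compose[OF measurable_component_singleton]) auto
next
  case False
  have "(\<lambda>D. g undefined) \<in> borel_measurable sample" by simp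
  moreover have "\<And>D. D \<in> space sample \<Longrightarrow> g undefined = g (D i)"
    using False by (auto simp: sample_def space_PiM PiE_def extensional_def)
  ultimately show ?thesis by (rule measurable_cong[THEN iffD1, rotated])
qed

lemma excess_loss_component_measurable[measurable]:
  "(\<lambda>D. excess_loss q (D i)) \<in> borel_measurable sample"
  by (rule measurable_sample_component) simp

lemma dict_dev_component_measurable[measurable]:
  "j < M \<Longrightarrow> (\<lambda>D. dict_dev j (D i)) \<in> borel_measurable sample"
  by (rule measurable_sample_component) simp

lemma pred_dev_component_measurable[measurable]:
  "(\<lambda>D. pred_dev (D i) q) \<in> borel_measurable sample"
  unfolding pred_dev_def
  by (intro borel_measurable_sum borel_measurable_times borel_measurable_const
      dict_dev_component_measurable) auto

lemma sym_sup_measurable[measurable]: "sym_sup \<in> borel_measurable (sample \<Otimes>\<^sub>M sample)"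
  unfolding sym_sup_def using countable_Theta_rat by measurable

lemma integral_sample_component:
  fixes g :: "'a \<times> real \<Rightarrow> real"
  assumes "i < n" "g \<in> borel_measurable P"
  shows "(\<integral>D. g (D i) \<partial>sample) = (\<integral>z. g z \<partial>P)"
proof -
  have "distr sample P (\<lambda>D. D i) = P"
    unfolding sample_def using assms(1) P by (intro distr_PiM_component) auto
  moreover have "(\<lambda>D. D i) \<in> measurable sample P"
    unfolding sample_def using assms(1) by (intro measurable_component_singleton) auto
  ultimately show ?thesis using integral_distr[of "\<lambda>D. D i" sample P g] assms(2) by simp
qed

lemma integral_ghost_exponent:
  assumes q: "q \<in> Theta M"
  shows "(\<integral>D'. lam / real n * (\<Sum>i<n. excess_loss q (D' i) - excess_loss q (D i)) - penalty q \<partial>sample)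
     = lam * ((\<integral>z. excess_loss q z \<partial>P) - (1 / real n) * (\<Sum>i<n. excess_loss q (D i))) - penalty q"
proof -
  have int: "integrable sample (\<lambda>D'. excess_loss q (D' i))" for i
    by (rule sample.integrable_const_bound[where B = "2 * C * b"]) (auto intro: excess_loss_bound[OF q])
  have "(\<integral>D'. (\<Sum>i<n. excess_loss q (D' i)) \<partial>sample) = (\<Sum>i<n. \<integral>D'. excess_loss q (D' i) \<partial>sample)"
    using int by simp
  also have "\<dots> = real n * (\<integral>z. excess_loss q z \<partial>P)"
    by (simp add: integral_sample_component)
  finally show ?thesis
    using int n_pos sample.prob_space by (simp add: sum_subtractf field_simps)
qed

lemma ghost_exponent_lipschitz:
  assumes q: "q \<in> Theta M" and r: "r \<in> Theta M"
  shows "lam / real n * (\<Sum>i<n. excess_loss q (D' i) - excess_loss q (D i)) - penalty q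
      \<le> (lam / real n * (\<Sum>i<n. excess_loss r (D' i) - excess_loss r (D i)) - penalty r)
         + (2 * lam * C * b + penalty_lip) * (\<Sum>j<M. \<bar>q j - r j\<bar>)"
proof -
  define \<Delta> where "\<Delta> = (\<Sum>j<M. \<bar>q j - r j\<bar>)"
  have "(\<Sum>i<n. excess_loss q (D' i) - excess_loss q (D i)) - (\<Sum>i<n. excess_loss r (D' i) - excess_loss r (D i))
      = (\<Sum>i<n. (excess_loss q (D' i) - excess_loss r (D' i)) - (excess_loss q (D i) - excess_loss r (D i)))"
    by (simp add: sum_subtractf[symmetric] algebra_simps)
  also have "\<dots> \<le> (\<Sum>i<n. 2 * (C * b * \<Delta>))"
    using excess_loss_diff_bound[OF q r] unfolding \<Delta>_def
    by (intro sum_mono) (smt (verit, best))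
  finally have "lam / real n * ((\<Sum>i<n. excess_loss q (D' i) - excess_loss q (D i))
      - (\<Sum>i<n. excess_loss r (D' i) - excess_loss r (D i))) \<le> lam / real n * (real n * (2 * C * b * \<Delta>))"
    using lam_pos n_pos by (intro mult_left_mono) auto
  moreover have "\<bar>penalty q - penalty r\<bar> \<le> penalty_lip * \<Delta>"
    using penalty_diff_bound[OF q r] by (simp add: \<Delta>_def)
  ultimately show ?thesis
    using n_pos unfolding \<Delta>_def[symmetric] by (simp add: algebra_simps abs_le_iff)
qed

lemma exp_ghost_le_sym_sup:
  assumes q: "q \<in> Theta M"
  shows "ennreal (exp (lam * ((\<integral>z. excess_loss q z \<partial>P) - (1 / real n) * (\<Sum>i<n. excess_loss q (D i)))
            - penalty q))
     \<le> (\<integral>\<^sup>+D'. sym_sup (D, D') \<partial>sample)"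
proof -
  define X where "X D' = lam / real n * (\<Sum>i<n. excess_loss q (D' i) - excess_loss q (D i)) - penalty q" for D'
  have "\<bar>X D'\<bar> \<le> lam / real n * (real n * (4 * C * b)) + \<bar>penalty q\<bar>" for D'
  proof -
    have "\<bar>excess_loss q (D' i) - excess_loss q (D i)\<bar> \<le> 4 * C * b" for i
      using excess_loss_bound[OF q, of "D' i"] excess_loss_bound[OF q, of "D i"] by linarith
    then have "\<bar>\<Sum>i<n. excess_loss q (D' i) - excess_loss q (D i)\<bar> \<le> (\<Sum>i<n. 4 * C * b)"
      by (intro order_trans[OF sum_abs sum_mono])
    then have "lam / real n * \<bar>\<Sum>i<n. excess_loss q (D' i) - excess_loss q (D i)\<bar>
        \<le> lam / real n * (real n * (4 * C * b))"
      using lam_pos by (intro mult_left_mono) auto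
    then have "\<bar>lam / real n * (\<Sum>i<n. excess_loss q (D' i) - excess_loss q (D i))\<bar>
        \<le> lam / real n * (real n * (4 * C * b))"
      using lam_pos by (simp add: abs_mult)
    then show ?thesis unfolding X_def by linarith
  qed
  then have "ennreal (exp (\<integral>D'. X D' \<partial>sample)) \<le> (\<integral>\<^sup>+D'. ennreal (exp (X D')) \<partial>sample)"
    by (intro ennreal_exp_integral_le_nn_integral_exp sample.prob_space_axioms) (auto simp: X_def)
  also have "\<dots> \<le> (\<integral>\<^sup>+D'. sym_sup (D, D') \<partial>sample)"
  proof (rule nn_integral_mono)
    fix D'
    show "ennreal (exp (X D')) \<le> sym_sup (D, D')"
      unfolding X_def sym_sup_def fst_conv snd_conv
      by (rule ennreal_exp_le_SUP_Theta_rat[OF q, where L = "2 * lam * C * b + penalty_lip"])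
         (use lam_pos C b penalty_lip_nonneg ghost_exponent_lipschitz[OF q] in auto)
  qed
  finally show ?thesis
    unfolding X_def integral_ghost_exponent[OF q] .
qed

subsection \<open>Symmetrisation and contraction\<close>

definition signed_sym_sup :: "nat set \<Rightarrow> (nat \<Rightarrow> 'a \<times> real) \<times> (nat \<Rightarrow> 'a \<times> real) \<Rightarrow> ennreal" where
  "signed_sym_sup S x = (SUP q\<in>Theta_rat M. ennreal (exp (lam / real n *
     (\<Sum>i<n. sgn_of S i * (excess_loss q (snd x i) - excess_loss q (fst x i))) - penalty q)))"

definition signed_loss_sup :: "real \<Rightarrow> nat set \<Rightarrow> (nat \<Rightarrow> 'a \<times> real) \<Rightarrow> ennreal" where
  "signed_loss_sup c S D = (SUP q\<in>Theta_rat M. ennreal (exp (- penalty q +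
     (\<Sum>i<n. sgn_of S i * (c * excess_loss q (D i))))))"

definition signed_dev_sup :: "nat set \<Rightarrow> (nat \<Rightarrow> 'a \<times> real) \<Rightarrow> ennreal" where
  "signed_dev_sup S D = (SUP q\<in>Theta_rat M. ennreal (exp (- penalty q +
     (\<Sum>i<n. sgn_of S i * (kap * pred_dev (D i) q)))))"

lemma signed_sym_sup_measurable[measurable]:
  "signed_sym_sup S \<in> borel_measurable (sample \<Otimes>\<^sub>M sample)"
  unfolding signed_sym_sup_def using countable_Theta_rat by measurable

lemma signed_loss_sup_measurable[measurable]: "signed_loss_sup c S \<in> borel_measurable sample"
  unfolding signed_loss_sup_def using countable_Theta_rat by measurable

lemma signed_dev_sup_measurable[measurable]: "signed_dev_sup S \<in> borel_measurable sample"
  unfolding signed_dev_sup_def using countable_Theta_rat by measurable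

lemma signed_sym_sup_eq_swap:
  assumes "S \<subseteq> {..<n}"
  shows "signed_sym_sup S x = sym_sup (swap_coords ({..<n} - S) x)"
  unfolding signed_sym_sup_def sym_sup_def
proof (intro SUP_cong refl arg_cong[where f = ennreal] arg_cong[where f = exp]
    arg_cong2[where f = "(-)"] arg_cong2[where f = "(*)"] sum.cong)
  fix q i assume "i \<in> {..<n}"
  then show "sgn_of S i * (excess_loss q (snd x i) - excess_loss q (fst x i)) =
      excess_loss q (snd (swap_coords ({..<n} - S) x) i) - excess_loss q (fst (swap_coords ({..<n} - S) x) i)"
    using assms by (cases "i \<in> S") (auto simp: sgn_of_def swap_coords_def)
qed

lemma nn_integral_signed_sym_sup:
  assumes "S \<subseteq> {..<n}"
  shows "(\<integral>\<^sup>+D. \<integral>\<^sup>+D'. signed_sym_sup S (D, D') \<partial>sample \<partial>sample)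
       = (\<integral>\<^sup>+D. \<integral>\<^sup>+D'. sym_sup (D, D') \<partial>sample \<partial>sample)"
  unfolding signed_sym_sup_eq_swap[OF assms] sample_def
  by (rule nn_integral_swap_coords[OF P]) (use sym_sup_measurable in \<open>auto simp: sample_def\<close>)

lemma signed_sym_sup_split:
  "2 * signed_sym_sup S x \<le> signed_loss_sup (2 * lam / real n) S (snd x)
     + signed_loss_sup (- (2 * lam / real n)) S (fst x)"
proof -
  have "2 * signed_sym_sup S x = (SUP q\<in>Theta_rat M. 2 * ennreal (exp (lam / real n *
      (\<Sum>i<n. sgn_of S i * (excess_loss q (snd x i) - excess_loss q (fst x i))) - penalty q)))"
    unfolding signed_sym_sup_def by (simp add: SUP_mult_left_ennreal)
  also have "\<dots> \<le> signed_loss_sup (2 * lam / real n) S (snd x) + signed_loss_sup (- (2 * lam / real n)) S (fst x)"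
  proof (rule SUP_least)
    fix q assume q: "q \<in> Theta_rat M"
    define \<alpha> where "\<alpha> = - penalty q + (\<Sum>i<n. sgn_of S i * (2 * lam / real n * excess_loss q (snd x i)))"
    define \<beta> where "\<beta> = - penalty q + (\<Sum>i<n. sgn_of S i * (- (2 * lam / real n) * excess_loss q (fst x i)))"
    have mid: "lam / real n * (\<Sum>i<n. sgn_of S i * (excess_loss q (snd x i) - excess_loss q (fst x i))) - penalty q
        = (\<alpha> + \<beta>) / 2"
    proof -
      have "(\<Sum>i<n. sgn_of S i * (2 * lam / real n * excess_loss q (snd x i)))
          + (\<Sum>i<n. sgn_of S i * (- (2 * lam / real n) * excess_loss q (fst x i)))
          = 2 * (lam / real n * (\<Sum>i<n. sgn_of S i * (excess_loss q (snd x i) - excess_loss q (fst x i))))"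
        by (simp only: sum.distrib[symmetric] sum_distrib_left) (rule sum.cong, simp_all add: algebra_simps)
      then show ?thesis unfolding \<alpha>_def \<beta>_def by simp
    qed
    have "2 * ennreal (exp ((\<alpha> + \<beta>) / 2)) = ennreal (2 * exp ((\<alpha> + \<beta>) / 2))"
      by (simp add: ennreal_mult)
    also have "\<dots> \<le> ennreal (exp \<alpha> + exp \<beta>)" by (intro ennreal_leI exp_midpoint_le)
    also have "\<dots> = ennreal (exp \<alpha>) + ennreal (exp \<beta>)" by (simp add: ennreal_plus)
    also have "\<dots> \<le> signed_loss_sup (2 * lam / real n) S (snd x) + signed_loss_sup (- (2 * lam / real n)) S (fst x)"
      unfolding signed_loss_sup_def \<alpha>_def \<beta>_def using q by (intro add_mono SUP_upper) auto
    finally show "2 * ennreal (exp (lam / real n *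
        (\<Sum>i<n. sgn_of S i * (excess_loss q (snd x i) - excess_loss q (fst x i))) - penalty q))
        \<le> signed_loss_sup (2 * lam / real n) S (snd x) + signed_loss_sup (- (2 * lam / real n)) S (fst x)"
      unfolding mid .
  qed
  finally show ?thesis .
qed

lemma nn_integral_sym_sup_le_signed_loss_sup:
  assumes S: "S \<subseteq> {..<n}"
  shows "2 * (\<integral>\<^sup>+D. \<integral>\<^sup>+D'. sym_sup (D, D') \<partial>sample \<partial>sample)
     \<le> (\<integral>\<^sup>+D. signed_loss_sup (2 * lam / real n) S D \<partial>sample)
       + (\<integral>\<^sup>+D. signed_loss_sup (- (2 * lam / real n)) S D \<partial>sample)"
proof -
  have "2 * (\<integral>\<^sup>+D. \<integral>\<^sup>+D'. sym_sup (D, D') \<partial>sample \<partial>sample)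
      = (\<integral>\<^sup>+D. \<integral>\<^sup>+D'. 2 * signed_sym_sup S (D, D') \<partial>sample \<partial>sample)"
    unfolding nn_integral_signed_sym_sup[OF S, symmetric]
    by (subst nn_integral_cmult[symmetric], measurable)
       (intro nn_integral_cong nn_integral_cmult[symmetric], measurable)
  also have "\<dots> \<le> (\<integral>\<^sup>+D. \<integral>\<^sup>+D'. signed_loss_sup (2 * lam / real n) S D'
                     + signed_loss_sup (- (2 * lam / real n)) S D \<partial>sample \<partial>sample)"
    using signed_sym_sup_split[of S] by (intro nn_integral_mono) auto
  also have "\<dots> = (\<integral>\<^sup>+D. signed_loss_sup (2 * lam / real n) S D \<partial>sample)
                 + (\<integral>\<^sup>+D. signed_loss_sup (- (2 * lam / real n)) S D \<partial>sample)"
    by (simp add: nn_integral_add sample.emeasure_space_1)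
  finally show ?thesis .
qed

lemma sum_signed_loss_sup_le:
  assumes c: "\<bar>c\<bar> = 2 * lam / real n"
  shows "(\<Sum>S\<in>Pow {..<n}. signed_loss_sup c S D) \<le> (\<Sum>S\<in>Pow {..<n}. signed_dev_sup S D)"
  unfolding signed_loss_sup_def signed_dev_sup_def
proof (rule sum_Pow_SUP_exp_contraction)
  have kap: "kap = \<bar>c\<bar> * C" using c by (simp add: kap_def)
  fix i q assume "q \<in> Theta_rat M"
  then have q: "q \<in> Theta M" using Theta_rat_subset by auto
  have "\<bar>c * excess_loss q (D i)\<bar> \<le> \<bar>c\<bar> * (C * \<bar>pred_dev (D i) q\<bar>)"
    unfolding abs_mult by (intro mult_left_mono abs_excess_loss_le[OF q]) simp
  then show "\<bar>c * excess_loss q (D i)\<bar> \<le> \<bar>kap * pred_dev (D i) q\<bar>"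
    using C by (simp add: kap abs_mult mult_ac)
  fix r assume "r \<in> Theta_rat M"
  then have r: "r \<in> Theta M" using Theta_rat_subset by auto
  have "\<bar>c * excess_loss q (D i) - c * excess_loss r (D i)\<bar>
      \<le> \<bar>c\<bar> * (C * \<bar>pred_dev (D i) q - pred_dev (D i) r\<bar>)"
    unfolding right_diff_distrib[symmetric] abs_mult
    by (intro mult_left_mono excess_loss_lipschitz[OF q r]) simp
  then show "\<bar>c * excess_loss q (D i) - c * excess_loss r (D i)\<bar>
      \<le> \<bar>kap * pred_dev (D i) q - kap * pred_dev (D i) r\<bar>"
    using C by (simp add: kap abs_mult mult_ac flip: right_diff_distrib)
qed simp

subsection \<open>Bounding the supremum by the vertices of the simplex\<close>

text \<open>The exponent is affine in \<open>q\<close>, so by convexity of \<open>exp\<close> the supremum over the simplex is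
  at most the sum over its vertices; \<open>K\<close> turns into the prior weights \<open>pr j\<close>.\<close>

lemma signed_dev_sup_le:
  "signed_dev_sup S D \<le> ennreal (\<Sum>j<M. pr j * exp (- (s * \<mu> * dist_sq j))
      * exp (\<Sum>i<n. sgn_of S i * (kap * dict_dev j (D i))))"
  unfolding signed_dev_sup_def
proof (rule SUP_least)
  fix q assume "q \<in> Theta_rat M"
  then have q: "q \<in> Theta M" using Theta_rat_subset by auto
  have q_nonneg: "\<And>j. j < M \<Longrightarrow> 0 \<le> q j" and q_sum: "(\<Sum>j<M. q j) = 1"
    using q by (auto simp: Theta_def)
  define y where "y j = kap * (\<Sum>i<n. sgn_of S i * dict_dev j (D i)) - s * \<mu> * dist_sq j - ln (1 / pr j)" for j
  have "(\<Sum>i<n. sgn_of S i * (kap * pred_dev (D i) q))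
      = (\<Sum>i<n. \<Sum>j<M. q j * (kap * (sgn_of S i * dict_dev j (D i))))"
    unfolding pred_dev_def by (simp add: sum_distrib_left algebra_simps)
  also have "\<dots> = (\<Sum>j<M. q j * (kap * (\<Sum>i<n. sgn_of S i * dict_dev j (D i))))"
    by (subst sum.swap) (simp add: sum_distrib_left)
  finally have "- penalty q + (\<Sum>i<n. sgn_of S i * (kap * pred_dev (D i) q)) = (\<Sum>j<M. q j * y j)"
    unfolding penalty_def Kfun_def y_def
    by (simp add: sum_distrib_left sum_subtractf right_diff_distrib sum.distrib algebra_simps)
  moreover have "exp (\<Sum>j<M. q j * y j) \<le> (\<Sum>j<M. q j * exp (y j))"
    using Theta_imp_pos[OF q] q_sum q_nonneg by (intro exp_convex_comb_le) auto
  moreover have "\<dots> \<le> (\<Sum>j<M. exp (y j))"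
    using q_nonneg Theta_le_one[OF q] by (intro sum_mono mult_left_le_one_le) auto
  moreover have "exp (y j) = pr j * exp (- (s * \<mu> * dist_sq j)) * exp (\<Sum>i<n. sgn_of S i * (kap * dict_dev j (D i)))"
    if "j < M" for j
    using pr_pos[OF that] unfolding y_def
    by (simp add: exp_diff exp_minus sum_distrib_left exp_add divide_inverse mult_ac)
  ultimately show "ennreal (exp (- penalty q + (\<Sum>i<n. sgn_of S i * (kap * pred_dev (D i) q))))
      \<le> ennreal (\<Sum>j<M. pr j * exp (- (s * \<mu> * dist_sq j)) * exp (\<Sum>i<n. sgn_of S i * (kap * dict_dev j (D i))))"
    by (intro ennreal_leI) simp
qed

lemma sum_signed_dev_sup_le:
  "(\<Sum>S\<in>Pow {..<n}. signed_dev_sup S D) \<le> ennreal (\<Sum>j<M. pr j * exp (- (s * \<mu> * dist_sq j))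
      * (\<Prod>i<n. exp (kap * dict_dev j (D i)) + exp (- (kap * dict_dev j (D i)))))"
proof -
  have "(\<Sum>S\<in>Pow {..<n}. signed_dev_sup S D) \<le> (\<Sum>S\<in>Pow {..<n}. ennreal (\<Sum>j<M.
      pr j * exp (- (s * \<mu> * dist_sq j)) * exp (\<Sum>i<n. sgn_of S i * (kap * dict_dev j (D i)))))"
    by (intro sum_mono signed_dev_sup_le)
  also have "\<dots> = ennreal (\<Sum>S\<in>Pow {..<n}. \<Sum>j<M.
      pr j * exp (- (s * \<mu> * dist_sq j)) * exp (\<Sum>i<n. sgn_of S i * (kap * dict_dev j (D i))))"
    by (intro sum_ennreal sum_nonneg mult_nonneg_nonneg) (auto simp: less_imp_le pr_pos)
  also have "(\<Sum>S\<in>Pow {..<n}. \<Sum>j<M.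
      pr j * exp (- (s * \<mu> * dist_sq j)) * exp (\<Sum>i<n. sgn_of S i * (kap * dict_dev j (D i))))
    = (\<Sum>j<M. pr j * exp (- (s * \<mu> * dist_sq j))
      * (\<Prod>i<n. exp (kap * dict_dev j (D i)) + exp (- (kap * dict_dev j (D i)))))"
    by (subst sum.swap) (simp add: sum_distrib_left[symmetric] sum_Pow_exp_sgn_of)
  finally show ?thesis .
qed

text \<open>Here the two conditions on \<open>s\<close> enter: \<open>(\<kappa> b)\<^sup>2 \<le> 1/3\<close> makes \<open>cosh\<close> quadratically bounded on the
  range of \<open>\<kappa> (f\<^sub>j - f\<^sub>\<theta>\<^sub>*)\<close>, and \<open>n \<kappa>\<^sup>2 \<le> s \<mu>\<close> lets the penalty absorb the resulting factor.\<close>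

lemma nn_integral_cosh_dict_dev:
  assumes j: "j < M"
  shows "(\<integral>\<^sup>+z. ennreal (exp (kap * dict_dev j z) + exp (- (kap * dict_dev j z))) \<partial>P)
    \<le> ennreal (2 * exp (kap\<^sup>2 * dist_sq j))"
proof -
  have sq_bound: "(dict_dev j z)\<^sup>2 \<le> (2 * b)\<^sup>2" for z
    using power_mono[OF dict_dev_bound[OF j, of z], of 2] by simp
  have "(kap * dict_dev j z)\<^sup>2 \<le> 2" for z
  proof -
    have "(kap * dict_dev j z)\<^sup>2 = kap\<^sup>2 * (dict_dev j z)\<^sup>2" by (simp add: power_mult_distrib)
    also have "\<dots> \<le> kap\<^sup>2 * (2 * b)\<^sup>2" by (intro mult_left_mono sq_bound) simp
    also have "\<dots> = 4 * (kap * b)\<^sup>2" by (simp add: power2_eq_square)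
    finally show ?thesis using kap_b_sq by simp
  qed
  then have "exp (kap * dict_dev j z) + exp (- (kap * dict_dev j z)) \<le> 2 * (1 + kap\<^sup>2 * (dict_dev j z)\<^sup>2)" for z
    using exp_add_exp_minus_le_quadratic[of "kap * dict_dev j z"] by (simp add: power_mult_distrib)
  then have "(\<integral>\<^sup>+z. ennreal (exp (kap * dict_dev j z) + exp (- (kap * dict_dev j z))) \<partial>P)
      \<le> (\<integral>\<^sup>+z. ennreal (2 * (1 + kap\<^sup>2 * (dict_dev j z)\<^sup>2)) \<partial>P)"
    by (intro nn_integral_mono ennreal_leI)
  also have "\<dots> = ennreal (2 * (1 + kap\<^sup>2 * dist_sq j))"
  proof -
    have int: "integrable P (\<lambda>z. (dict_dev j z)\<^sup>2)"
      by (rule P.integrable_const_bound[where B = "(2 * b)\<^sup>2"]) (use sq_bound j in auto)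
    then have "(\<integral>\<^sup>+z. ennreal (2 * (1 + kap\<^sup>2 * (dict_dev j z)\<^sup>2)) \<partial>P)
        = ennreal (\<integral>z. 2 * (1 + kap\<^sup>2 * (dict_dev j z)\<^sup>2) \<partial>P)"
      by (intro nn_integral_eq_integral) auto
    then show ?thesis
      using int P.prob_space integral_dict_dev_sq[OF j] by simp
  qed
  also have "\<dots> \<le> ennreal (2 * exp (kap\<^sup>2 * dist_sq j))"
    by (intro ennreal_leI mult_left_mono) (auto intro: exp_ge_add_one_self)
  finally show ?thesis .
qed

lemma vertex_weight_le:
  assumes "j < M"
  shows "pr j * exp (- (s * \<mu> * dist_sq j)) * (2 * exp (kap\<^sup>2 * dist_sq j)) ^ n \<le> pr j * 2 ^ n"
proof -
  have "pr j * exp (- (s * \<mu> * dist_sq j)) * (2 * exp (kap\<^sup>2 * dist_sq j)) ^ n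
      = pr j * 2 ^ n * exp (real n * kap\<^sup>2 * dist_sq j - s * \<mu> * dist_sq j)"
    by (simp add: power_mult_distrib exp_of_nat_mult[symmetric] exp_diff exp_minus field_simps)
  moreover have "exp (real n * kap\<^sup>2 * dist_sq j - s * \<mu> * dist_sq j) \<le> 1"
    using mult_right_mono[OF n_kap_sq_le dist_sq_nonneg[of j]] by simp
  ultimately show ?thesis
    using pr_pos[OF assms] by (simp add: mult_left_le)
qed

lemma nn_integral_prod_cosh_dict_dev:
  assumes j: "j < M"
  shows "(\<integral>\<^sup>+D. (\<Prod>i<n. ennreal (exp (kap * dict_dev j (D i)) + exp (- (kap * dict_dev j (D i))))) \<partial>sample)
    \<le> ennreal (2 * exp (kap\<^sup>2 * dist_sq j)) ^ n"
proof -
  interpret product_sigma_finite "\<lambda>_::nat. P"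
    unfolding product_sigma_finite_def using P.sigma_finite_measure_axioms by simp
  have "(\<integral>\<^sup>+D. (\<Prod>i<n. ennreal (exp (kap * dict_dev j (D i)) + exp (- (kap * dict_dev j (D i))))) \<partial>sample)
      = (\<Prod>i<n. \<integral>\<^sup>+z. ennreal (exp (kap * dict_dev j z) + exp (- (kap * dict_dev j z))) \<partial>P)"
    unfolding sample_def by (intro product_nn_integral_prod) (use j in auto)
  also have "\<dots> \<le> ennreal (2 * exp (kap\<^sup>2 * dist_sq j)) ^ n"
    using nn_integral_cosh_dict_dev[OF j] by (simp add: power_mono)
  finally show ?thesis .
qed

lemma nn_integral_sum_signed_dev_sup_le:
  "(\<integral>\<^sup>+D. (\<Sum>S\<in>Pow {..<n}. signed_dev_sup S D) \<partial>sample) \<le> 2 ^ n"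
proof -
  define c where "c j = pr j * exp (- (s * \<mu> * dist_sq j))" for j
  define F where "F j z = exp (kap * dict_dev j z) + exp (- (kap * dict_dev j z))" for j z
  have c_nonneg: "j < M \<Longrightarrow> 0 \<le> c j" for j using pr_pos[of j] by (simp add: c_def)
  have F_nonneg: "0 \<le> F j z" for j z by (simp add: F_def add_nonneg_nonneg)
  have two_pow: "ennreal ((2::real) ^ n) = 2 ^ n"
    by (metis ennreal_numeral ennreal_power zero_le_numeral)
  have "(\<integral>\<^sup>+D. (\<Sum>S\<in>Pow {..<n}. signed_dev_sup S D) \<partial>sample)
      \<le> (\<integral>\<^sup>+D. (\<Sum>j<M. ennreal (c j) * (\<Prod>i<n. ennreal (F j (D i)))) \<partial>sample)"
  proof (intro nn_integral_mono)
    fix D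
    have "(\<Sum>S\<in>Pow {..<n}. signed_dev_sup S D) \<le> ennreal (\<Sum>j<M. c j * (\<Prod>i<n. F j (D i)))"
      using sum_signed_dev_sup_le[of D] by (simp add: c_def F_def)
    also have "\<dots> = (\<Sum>j<M. ennreal (c j * (\<Prod>i<n. F j (D i))))"
      using c_nonneg by (intro sum_ennreal[symmetric]) (auto intro!: mult_nonneg_nonneg prod_nonneg F_nonneg)
    also have "\<dots> = (\<Sum>j<M. ennreal (c j) * (\<Prod>i<n. ennreal (F j (D i))))"
      using c_nonneg by (intro sum.cong refl) (auto simp: ennreal_mult prod_ennreal prod_nonneg F_nonneg)
    finally show "(\<Sum>S\<in>Pow {..<n}. signed_dev_sup S D) \<le> \<dots>" .
  qed
  also have "\<dots> = (\<Sum>j<M. ennreal (c j) * (\<integral>\<^sup>+D. (\<Prod>i<n. ennreal (F j (D i))) \<partial>sample))"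
  proof -
    have "j < M \<Longrightarrow> (\<lambda>D. \<Prod>i<n. ennreal (F j (D i))) \<in> borel_measurable sample" for j
      unfolding sample_def F_def
      by (intro borel_measurable_prod_ennreal) (auto intro!: measurable_compose[OF measurable_component_singleton])
    then show ?thesis
      by (subst nn_integral_sum) (auto intro!: sum.cong nn_integral_cmult)
  qed
  also have "\<dots> \<le> (\<Sum>j<M. ennreal (c j) * ennreal (2 * exp (kap\<^sup>2 * dist_sq j)) ^ n)"
    unfolding F_def by (intro sum_mono mult_left_mono nn_integral_prod_cosh_dict_dev) auto
  also have "\<dots> = ennreal (\<Sum>j<M. c j * (2 * exp (kap\<^sup>2 * dist_sq j)) ^ n)"
    using c_nonneg by (subst sum_ennreal[symmetric]) (auto simp: ennreal_mult ennreal_power two_pow intro!: sum.cong)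
  also have "\<dots> \<le> ennreal (\<Sum>j<M. pr j * 2 ^ n)"
    unfolding c_def by (intro ennreal_leI sum_mono vertex_weight_le) simp
  also have "\<dots> = 2 ^ n"
    using pr_sum two_pow by (simp add: sum_distrib_right[symmetric])
  finally show ?thesis .
qed

lemma nn_integral_sym_sup_le_1: "(\<integral>\<^sup>+D. \<integral>\<^sup>+D'. sym_sup (D, D') \<partial>sample \<partial>sample) \<le> 1"
proof -
  define A where "A = (\<integral>\<^sup>+D. \<integral>\<^sup>+D'. sym_sup (D, D') \<partial>sample \<partial>sample)"
  let ?L = "\<lambda>c. \<integral>\<^sup>+D. (\<Sum>S\<in>Pow {..<n}. signed_loss_sup c S D) \<partial>sample"
  have "(2 ^ n * 2) * A = (\<Sum>S\<in>Pow {..<n}. 2 * A)"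
    by (simp add: card_Pow mult_ac)
  also have "\<dots> \<le> ?L (2 * lam / real n) + ?L (- (2 * lam / real n))"
    unfolding A_def
    using sum_mono[OF nn_integral_sym_sup_le_signed_loss_sup, of "Pow {..<n}"]
    by (simp add: sum.distrib nn_integral_sum)
  also have "\<dots> \<le> 2 ^ n + 2 ^ n"
    using lam_pos
    by (intro add_mono order_trans[OF nn_integral_mono[OF sum_signed_loss_sup_le]
          nn_integral_sum_signed_dev_sup_le]) auto
  finally have "(2 ^ n * 2) * A \<le> (2 ^ n * 2) * (1::ennreal)"
    by (simp add: mult_2_right)
  then show ?thesis
    unfolding A_def by (subst (asm) ennreal_mult_le_mult_iff) (auto simp: ennreal_mult_eq_top_iff power_eq_top_ennreal)
qed

lemma objective_eq:
  assumes "\<forall>i\<in>{..<n}. D i \<in> good"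
  shows "objective q D
    = lam * ((\<integral>z. excess_loss q z \<partial>P) - (1 / real n) * (\<Sum>i<n. excess_loss q (D i))) - penalty q"
proof -
  have "(\<integral>z. loss (snd z) (f_theta M f q (fst z)) - loss (snd z) (f_theta M f \<theta>s (fst z)) \<partial>P)
      = (\<integral>z. excess_loss q z \<partial>P)"
    using loss_diff_measurable
    by (intro integral_cong_AE) (auto simp: excess_loss_def intro: eventually_mono[OF AE_in_good])
  moreover have "(\<Sum>i<n. loss (snd (D i)) (f_theta M f q (fst (D i)))
      - loss (snd (D i)) (f_theta M f \<theta>s (fst (D i)))) = (\<Sum>i<n. excess_loss q (D i))"
    using assms by (intro sum.cong) (auto simp: excess_loss_def)
  ultimately show ?thesis
    by (simp add: objective_def lam_def penalty_def dist_sq_def algebra_simps)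
qed

lemma exp_objective_le_sym_sup:
  assumes "q \<in> Theta M" "\<forall>i\<in>{..<n}. D i \<in> good"
  shows "ennreal (exp (objective q D)) \<le> (\<integral>\<^sup>+D'. sym_sup (D, D') \<partial>sample)"
  unfolding objective_eq[OF assms(2)] by (rule exp_ghost_le_sym_sup[OF assms(1)])

end

theorem mainTheorem6:
  fixes P :: "('a \<times> real) measure"
    and n M :: nat
    and f :: "nat \<Rightarrow> 'a \<Rightarrow> real"
    and loss :: "real \<Rightarrow> real \<Rightarrow> real"
    and b C \<nu> \<mu> s :: real
    and pr :: "nat \<Rightarrow> real"
    and \<theta>s :: "nat \<Rightarrow> real"
    and \<theta>h :: "(nat \<Rightarrow> 'a \<times> real) \<Rightarrow> nat \<Rightarrow> real"
  assumes P: "prob_space P"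
    and b: "b > 0"
    and C: "C > 0"
    and snd_meas: "snd \<in> borel_measurable P"
    and f_meas: "\<And>j. j < M \<Longrightarrow> (\<lambda>z. f j (fst z)) \<in> borel_measurable P"
    and loss_meas: "(\<lambda>(y, t). loss y t) \<in> borel_measurable borel"
    and Y_bdd: "AE z in P. \<bar>snd z\<bar> \<le> b"
    and f_bdd: "AE z in P. \<forall>j<M. \<bar>f j (fst z)\<bar> \<le> b"
    and lipschitz: "AE z in P. \<forall>u\<in>{-b..b}. \<forall>v\<in>{-b..b}.
                      \<bar>loss (snd z) u - loss (snd z) v\<bar> \<le> C * \<bar>u - v\<bar>"
    and pr_pos: "\<And>j. j < M \<Longrightarrow> pr j > 0"
    and pr_sum: "(\<Sum>j<M. pr j) = 1"
    and \<nu>: "0 < \<nu>" "\<nu> < 1"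
    and \<mu>: "\<mu> > 0"
    and \<theta>s: "\<theta>s \<in> Theta M"
    and s_pos: "s > 0"
    and s1: "s \<le> \<mu> * real n / (2 * C * (1 - \<nu>))\<^sup>2"
    and s2: "s < real n / (2 * sqrt 3 * b * C * (1 - \<nu>))"
    and \<theta>h_meas: "\<And>j. j < M \<Longrightarrow> (\<lambda>D. \<theta>h D j) \<in> borel_measurable (PiM {..<n} (\<lambda>_. P))"
    and \<theta>h_Theta: "\<And>D. D \<in> space (PiM {..<n} (\<lambda>_. P)) \<Longrightarrow> \<theta>h D \<in> Theta M"
  shows "(\<integral>\<^sup>+ D. ennreal (exp (
            s * ((1 - \<nu>) *
                   ((\<integral>z. loss (snd z) (f_theta M f (\<theta>h D) (fst z))
                          - loss (snd z) (f_theta M f \<theta>s (fst z)) \<partial>P)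
                    - (1 / real n) * (\<Sum>i<n. loss (snd (D i)) (f_theta M f (\<theta>h D) (fst (D i)))
                                          - loss (snd (D i)) (f_theta M f \<theta>s (fst (D i)))))
                 - \<mu> * (\<Sum>j<M. \<theta>h D j *
                          (\<integral>z. (f j (fst z) - f_theta M f \<theta>s (fst z))\<^sup>2 \<partial>P)))
            - Kfun M pr (\<theta>h D)))
          \<partial>(PiM {..<n} (\<lambda>_. P))) \<le> 1"
proof -
  interpret aggregation_setting P n M f loss b C \<nu> \<mu> s pr \<theta>s
    by (rule aggregation_setting.intro) (fact P b C snd_meas f_meas loss_meas f_bdd lipschitz pr_pos pr_sum \<nu> \<mu> \<theta>s s_pos s1 s2)+
  have "AE D in sample. ennreal (exp (objective (\<theta>h D) D)) \<le> (\<integral>\<^sup>+D'. sym_sup (D, D') \<partial>sample)"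
    using AE_sample_good AE_space
    by eventually_elim (intro exp_objective_le_sym_sup \<theta>h_Theta, simp_all add: sample_def)
  then have "(\<integral>\<^sup>+D. ennreal (exp (objective (\<theta>h D) D)) \<partial>sample)
      \<le> (\<integral>\<^sup>+D. \<integral>\<^sup>+D'. sym_sup (D, D') \<partial>sample \<partial>sample)"
    by (rule nn_integral_mono_AE)
  also have "\<dots> \<le> 1" by (rule nn_integral_sym_sup_le_1)
  finally show ?thesis by (simp only: objective_def sample_def)
qed

end
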